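(* Let $n\ge2$. The homomorphism $\phi:\mathrm{Br}(\mathrm{C}_n)\to\mathrm{SBr}(\mathrm{A}_{2n-1})$ determined by $\phi(r_0)=R_n$, $\phi(e_0)=E_n$, $\phi(r_i)=R_{n-i}R_{n+i}$, $\phi(e_i)=E_{n-i}E_{n+i}$ ($0<i<n$) is surjective.
   Context: Let $R$ be a commutative ring with an invertible element $\delta$, and $n\ge1$. The Brauer algebra of type $\mathrm{C}_n$, $\mathrm{Br}(\mathrm{C}_n,R,\delta)$, is the unital associative $R$-algebra generated by $r_0,\dots,r_{n-1},e_0,\dots,e_{n-1}$ subject to the following relations, where for distinct $i,j\in\{0,\dots,n-1\}$ we write $i\sim j$ if $|i-j|=1$ and $i\nsim j$ otherwise: $r_i^2=1$ and $r_ie_i=e_ir_i=e_i$ for all $i$; $e_i^2=\delta^2e_i$ for $i>0$; $e_0^2=\delta e_0$; $r_ir_j=r_jr_i$, $e_ir_j=r_je_i$, $e_ie_j=e_je_i$ for $i\nsim j$; $r_ir_jr_i=r_jr_ir_j$, $r_jr_ie_j=e_ie_j$, $r_ie_jr_i=r_je_ir_j$ for $i\sim j$ with $i,j>0$; and $r_1r_0r_1r_0=r_0r_1r_0r_1$, $r_1r_0e_1=r_0e_1$, $r_1e_0r_1e_0=e_0e_1e_0$, $r_1r_0r_1e_0=e_0r_1r_0r_1$, $e_1r_0e_1=\delta e_1$, $e_1e_0e_1=\delta e_1$, $e_1r_0r_1=e_1r_0$, $e_1e_0r_1=e_1e_0$. Write $\mathrm{Br}(\mathrm{C}_n)=\mathrm{Br}(\mathrm{C}_n,\mathbb{Z}[\delta^{\pm1}],\delta)$.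 $\mathrm{Br}(\mathrm{A}_{2n-1})$ denotes the classical Brauer algebra on $2n$ strands over $\mathbb{Z}[\delta^{\pm1}]$: it is free with basis the Brauer diagrams, i.e. perfect matchings of the $4n$ dots $(j,1),(j,0)$, $1\le j\le 2n$, with multiplication by concatenation where each closed loop formed is replaced by a factor $\delta$. $R_j$ ($1\le j\le 2n-1$) is the diagram joining $(j,1)$ to $(j+1,0)$, $(j+1,1)$ to $(j,0)$ and $(k,1)$ to $(k,0)$ for $k\ne j,j+1$; $E_j$ is the diagram joining $(j,1)$ to $(j+1,1)$, $(j,0)$ to $(j+1,0)$ and $(k,1)$ to $(k,0)$ for $k\neq j,j+1$. A Brauer diagram is symmetric if it is invariant under the reflection $(j,\epsilon)\mapsto(2n+1-j,\epsilon)$. $\mathrm{SBr}(\mathrm{A}_{2n-1})$ is the $\mathbb{Z}[\delta^{\pm1}]$-span of the symmetric diagrams (a subalgebra). It is a known fact (used freely) that $\phi$ is a well-defined algebra homomorphism. *)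

theory Defs
  imports "HOL-Computational_Algebra.Formal_Laurent_Series"
begin

text \<open>Z[delta^(+-1)] is realised as the Laurent polynomials inside the integer Laurent
series, with delta = fls_X.\<close>

definition laurent_poly :: "int fls \<Rightarrow> bool" where
  "laurent_poly f \<longleftrightarrow> finite {k. fls_nth f k \<noteq> 0}"

abbreviation delta :: "int fls" where "delta \<equiv> fls_X"

type_synonym dot = "nat \<times> nat"
type_synonym diagram = "dot \<Rightarrow> dot"

definition dots :: "nat \<Rightarrow> dot set" where
  "dots N = {1..N} \<times> {0, 1}"

text \<open>A perfect matching of the dots is encoded as a fixed-point-free involution of
the dots (each dot is sent to its partner), extended by the identity elsewhere.\<close>

definition brauer_diagram :: "nat \<Rightarrow> diagram \<Rightarrow> bool" where
  "brauer_diagram N d \<longleftrightarrow>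
     (\<forall>x\<in>dots N. d x \<in> dots N \<and> d x \<noteq> x \<and> d (d x) = x) \<and> (\<forall>x. x \<notin> dots N \<longrightarrow> d x = x)"

definition id_diag :: "nat \<Rightarrow> diagram" where
  "id_diag N = (\<lambda>(k, e). if (k, e) \<in> dots N then (k, 1 - e) else (k, e))"

definition R_diag :: "nat \<Rightarrow> nat \<Rightarrow> diagram" where
  "R_diag N j = (\<lambda>(k, e). if (k, e) \<notin> dots N then (k, e)
       else if k = j then (j + 1, 1 - e)
       else if k = j + 1 then (j, 1 - e)
       else (k, 1 - e))"

definition E_diag :: "nat \<Rightarrow> nat \<Rightarrow> diagram" where
  "E_diag N j = (\<lambda>(k, e). if (k, e) \<notin> dots N then (k, e)
       else if k = j then (j + 1, e)
       else if k = j + 1 then (j, e)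
       else (k, 1 - e))"

definition reflect :: "nat \<Rightarrow> dot \<Rightarrow> dot" where
  "reflect N = (\<lambda>(j, e). (N + 1 - j, e))"

definition symmetric_diag :: "nat \<Rightarrow> diagram \<Rightarrow> bool" where
  "symmetric_diag N d \<longleftrightarrow> (\<forall>x\<in>dots N. d (reflect N x) = reflect N (d x))"

text \<open>Vertices of the stacked picture: (0,j) top row of d1, (1,j) the identified
middle row (bottom of d1 = top of d2), (2,j) bottom row of d2.\<close>

definition top_map :: "dot \<Rightarrow> nat \<times> nat" where
  "top_map = (\<lambda>(j, e). if e = 1 then (0, j) else (1, j))"

definition bot_map :: "dot \<Rightarrow> nat \<times> nat" where
  "bot_map = (\<lambda>(j, e). if e = 1 then (1, j) else (2, j))"

definition out_map :: "dot \<Rightarrow> nat \<times> nat" where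
  "out_map = (\<lambda>(j, e). if e = 1 then (0, j) else (2, j))"

definition comp_edges :: "nat \<Rightarrow> diagram \<Rightarrow> diagram \<Rightarrow> ((nat \<times> nat) \<times> (nat \<times> nat)) set" where
  "comp_edges N d1 d2 =
     {(top_map x, top_map (d1 x)) | x. x \<in> dots N} \<union> {(bot_map x, bot_map (d2 x)) | x. x \<in> dots N}"

definition compose :: "nat \<Rightarrow> diagram \<Rightarrow> diagram \<Rightarrow> diagram" where
  "compose N d1 d2 = (\<lambda>x. if x \<in> dots N then
      (THE y. y \<in> dots N \<and> y \<noteq> x \<and> (out_map x, out_map y) \<in> (comp_edges N d1 d2)\<^sup>*)
      else x)"

definition loops :: "nat \<Rightarrow> diagram \<Rightarrow> diagram \<Rightarrow> nat" where
  "loops N d1 d2 = card {C. \<exists>j\<in>{1..N}. C = ((comp_edges N d1 d2)\<^sup>*) `` {(1, j)}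
                              \<and> C \<subseteq> {1} \<times> {1..N}}"

type_synonym br_elem = "diagram \<Rightarrow> int fls"

definition Br :: "nat \<Rightarrow> br_elem set" where
  "Br N = {a. (\<forall>d. a d \<noteq> 0 \<longrightarrow> brauer_diagram N d) \<and> (\<forall>d. laurent_poly (a d))}"

definition SBr :: "nat \<Rightarrow> br_elem set" where
  "SBr N = {a \<in> Br N. \<forall>d. a d \<noteq> 0 \<longrightarrow> symmetric_diag N d}"

definition basis_elem :: "diagram \<Rightarrow> br_elem" where
  "basis_elem d = (\<lambda>d'. if d' = d then 1 else 0)"

definition br_mult :: "nat \<Rightarrow> br_elem \<Rightarrow> br_elem \<Rightarrow> br_elem" where
  "br_mult N a b = (\<lambda>d. \<Sum>(d1, d2) \<in> {(d1, d2). brauer_diagram N d1 \<and> brauer_diagram N d2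
                                            \<and> compose N d1 d2 = d}.
                        a d1 * b d2 * delta ^ loops N d1 d2)"

inductive_set gen_subalg :: "nat \<Rightarrow> br_elem set \<Rightarrow> br_elem set" for N G where
  one: "basis_elem (id_diag N) \<in> gen_subalg N G"
| gen: "g \<in> G \<Longrightarrow> g \<in> gen_subalg N G"
| add: "x \<in> gen_subalg N G \<Longrightarrow> y \<in> gen_subalg N G \<Longrightarrow> (\<lambda>d. x d + y d) \<in> gen_subalg N G"
| smult: "laurent_poly c \<Longrightarrow> x \<in> gen_subalg N G \<Longrightarrow> (\<lambda>d. c * x d) \<in> gen_subalg N G"
| mult: "x \<in> gen_subalg N G \<Longrightarrow> y \<in> gen_subalg N G \<Longrightarrow> br_mult N x y \<in> gen_subalg N G"

definition phi_gens :: "nat \<Rightarrow> br_elem set" where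
  "phi_gens n =
     {basis_elem (R_diag (2 * n) n), basis_elem (E_diag (2 * n) n)}
     \<union> {br_mult (2 * n) (basis_elem (R_diag (2 * n) (n - i))) (basis_elem (R_diag (2 * n) (n + i))) | i. 0 < i \<and> i < n}
     \<union> {br_mult (2 * n) (basis_elem (E_diag (2 * n) (n - i))) (basis_elem (E_diag (2 * n) (n + i))) | i. 0 < i \<and> i < n}"

definition phi_image :: "nat \<Rightarrow> br_elem set" where
  "phi_image n = gen_subalg (2 * n) (phi_gens n)"

end

(*
  The image of phi is spanned by the basis elements of the diagrams in the monoid generated
  by the concatenations that the generators r_i, e_i are sent to: each generator goes to a
  basis element times a power of delta, and a product of two basis elements is the basis
  element of the concatenation times a power of delta, a unit of the coefficient ring.
  These diagrams are symmetric and symmetry is preserved by concatenation, which gives one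
  inclusion.

  Conversely, every symmetric diagram lies in the monoid, by induction on the number of
  leftmost strands that are vertical (by symmetry, the same number of rightmost strands are
  vertical as well). Look at the strands through the top and bottom dots of the first
  non-vertical column j. A strand from top to bottom, or an arc ending at a column other than
  j + 1 or the mirror column, is shortened by one column by multiplying with a symmetric
  permutation phi(r_i); the flip, an anti-automorphism of the monoid, exchanges the roles of
  the top and the bottom row; an arc from j to its mirror column is split off as a cap
  joining j to that column (a conjugate of phi(e_0) by permutations), an arc from j to j + 1
  as the double cap phi(e_{n-j}), leaving a symmetric diagram that is vertical at column j.
*)
theory Submission
  imports Defs
begin

lemma laurent_poly_iff_eventually_zero: "laurent_poly f \<longleftrightarrow> (\<exists>M. \<forall>k>M. fls_nth f k = 0)"
proof
  assume "laurent_poly f"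
  hence fin: "finite {k. fls_nth f k \<noteq> 0}" by (simp add: laurent_poly_def)
  show "\<exists>M. \<forall>k>M. fls_nth f k = 0"
  proof (cases "{k. fls_nth f k \<noteq> 0} = {}")
    case True thus ?thesis by auto
  next
    case False
    show ?thesis using Max_ge[OF fin] by (intro exI[of _ "Max {k. fls_nth f k \<noteq> 0}"]) force
  qed
next
  assume "\<exists>M. \<forall>k>M. fls_nth f k = 0"
  then obtain M where M: "\<forall>k>M. fls_nth f k = 0" by blast
  have "{k. fls_nth f k \<noteq> 0} \<subseteq> {fls_subdegree f..M}"
    using M fls_subdegree_leI[of f] by (auto simp: not_less)
  thus "laurent_poly f" unfolding laurent_poly_def by (rule finite_subset) simp
qed

lemma laurent_poly_mult: "laurent_poly f \<Longrightarrow> laurent_poly g \<Longrightarrow> laurent_poly (f * g)"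
proof -
  assume "laurent_poly f" "laurent_poly g"
  then obtain Mf Mg where F: "\<forall>k>Mf. fls_nth f k = 0" and G: "\<forall>k>Mg. fls_nth g k = 0"
    by (auto simp: laurent_poly_iff_eventually_zero)
  have "\<forall>n>Mf + Mg. fls_nth (f * g) n = 0"
  proof (intro allI impI)
    fix n assume n: "n > Mf + Mg"
    show "fls_nth (f * g) n = 0" unfolding fls_times_nth(2)
      by (rule sum.neutral) (use F G n in \<open>force\<close>)
  qed
  thus ?thesis by (auto simp: laurent_poly_iff_eventually_zero)
qed

lemma laurent_poly_add: "laurent_poly f \<Longrightarrow> laurent_poly g \<Longrightarrow> laurent_poly (f + g)"
  unfolding laurent_poly_def
  by (rule finite_subset[of _ "{k. fls_nth f k \<noteq> 0} \<union> {k. fls_nth g k \<noteq> 0}"]) auto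

lemma laurent_poly_zero [simp]: "laurent_poly 0"
  by (simp add: laurent_poly_def)

lemma laurent_poly_sum: "(\<And>x. x \<in> A \<Longrightarrow> laurent_poly (f x)) \<Longrightarrow> laurent_poly (\<Sum>x\<in>A. f x)"
  by (induction A rule: infinite_finite_induct) (auto intro: laurent_poly_add)

lemma laurent_poly_one [simp]: "laurent_poly 1"
  unfolding laurent_poly_def by (rule finite_subset[of _ "{0}"]) auto

lemma laurent_poly_power: "laurent_poly f \<Longrightarrow> laurent_poly (f ^ k)"
  by (induction k) (auto intro: laurent_poly_mult)

lemma laurent_poly_X [simp]: "laurent_poly fls_X"
  unfolding laurent_poly_def by (rule finite_subset[of _ "{1}"]) auto

lemma laurent_poly_X_inv [simp]: "laurent_poly fls_X_inv"
  unfolding laurent_poly_def by (rule finite_subset[of _ "{-1}"]) auto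

lemma fls_X_inv_power_mult_X_power: "(fls_X_inv :: int fls) ^ k * fls_X ^ k = 1"
  by (simp add: power_mult_distrib[symmetric] fls_X_inv_times_conv_shift fls_X_conv_shift_1)


section \<open>Concatenation of Brauer diagrams\<close>

lemma brauer_diagram_closed: "brauer_diagram N d \<Longrightarrow> x \<in> dots N \<Longrightarrow> d x \<in> dots N"
  and brauer_diagram_no_fixpoint: "brauer_diagram N d \<Longrightarrow> x \<in> dots N \<Longrightarrow> d x \<noteq> x"
  and brauer_diagram_involution: "brauer_diagram N d \<Longrightarrow> x \<in> dots N \<Longrightarrow> d (d x) = x"
  and brauer_diagram_outside: "brauer_diagram N d \<Longrightarrow> x \<notin> dots N \<Longrightarrow> d x = x"
  unfolding brauer_diagram_def by blast+

lemma out_map_inj: "x \<in> dots N \<Longrightarrow> y \<in> dots N \<Longrightarrow> out_map x = out_map y \<Longrightarrow> x = y"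
  by (cases x; cases y) (auto simp: out_map_def dots_def split: if_splits)

lemma dot_maps_simps [simp]:
  "top_map (k, Suc 0) = (0, k)" "top_map (k, 0) = (Suc 0, k)"
  "bot_map (k, Suc 0) = (Suc 0, k)" "bot_map (k, 0) = (2, k)"
  "out_map (k, Suc 0) = (0, k)" "out_map (k, 0) = (2, k)"
  by (auto simp: top_map_def bot_map_def out_map_def)

lemma brauer_diagram_id: "brauer_diagram N (id_diag N)"
  unfolding brauer_diagram_def id_diag_def by (auto simp: dots_def)

lemma diag_eqI:
  assumes "\<And>k e. (k, e) \<notin> dots N \<Longrightarrow> d (k, e) = d' (k, e)"
    and "\<And>k. 1 \<le> k \<Longrightarrow> k \<le> N \<Longrightarrow> d (k, 0) = d' (k, 0)"
    and "\<And>k. 1 \<le> k \<Longrightarrow> k \<le> N \<Longrightarrow> d (k, Suc 0) = d' (k, Suc 0)"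
  shows "d = d'"
proof
  fix x :: dot
  obtain k e where xk: "x = (k, e)" by fastforce
  show "d x = d' x"
  proof (cases "(k, e) \<in> dots N")
    case True
    hence "1 \<le> k" "k \<le> N" "e = 0 \<or> e = 1" by (auto simp: dots_def)
    thus ?thesis using assms(2,3) xk by auto
  qed (use assms(1) xk in auto)
qed

lemma not_in_dots_iff: "(k, e) \<notin> dots N \<longleftrightarrow> \<not> (1 \<le> k \<and> k \<le> N \<and> (e = 0 \<or> e = 1))"
  by (auto simp: dots_def)

definition upper_vertices :: "nat \<Rightarrow> (nat \<times> nat) set" where
  "upper_vertices N = {0, 1} \<times> {1..N}"

definition lower_vertices :: "nat \<Rightarrow> (nat \<times> nat) set" where
  "lower_vertices N = {1, 2} \<times> {1..N}"

definition upper_dot :: "nat \<times> nat \<Rightarrow> dot" where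
  "upper_dot v = (snd v, if fst v = 0 then 1 else 0)"

definition lower_dot :: "nat \<times> nat \<Rightarrow> dot" where
  "lower_dot v = (snd v, if fst v = 1 then 1 else 0)"

lemma upper_dot_top_map: "x \<in> dots N \<Longrightarrow> upper_dot (top_map x) = x"
  by (cases x) (auto simp: upper_dot_def dots_def)

lemma lower_dot_bot_map: "x \<in> dots N \<Longrightarrow> lower_dot (bot_map x) = x"
  by (cases x) (auto simp: lower_dot_def dots_def)

lemma top_map_upper_dot: "v \<in> upper_vertices N \<Longrightarrow> top_map (upper_dot v) = v"
  by (cases v) (auto simp: upper_vertices_def upper_dot_def)

lemma bot_map_lower_dot: "v \<in> lower_vertices N \<Longrightarrow> bot_map (lower_dot v) = v"
  by (cases v) (auto simp: lower_vertices_def lower_dot_def)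

lemma upper_dot_in_dots: "v \<in> upper_vertices N \<Longrightarrow> upper_dot v \<in> dots N"
  by (auto simp: upper_vertices_def upper_dot_def dots_def)

lemma lower_dot_in_dots: "v \<in> lower_vertices N \<Longrightarrow> lower_dot v \<in> dots N"
  by (auto simp: lower_vertices_def lower_dot_def dots_def)

lemma top_map_upper: "x \<in> dots N \<Longrightarrow> top_map x \<in> upper_vertices N"
  by (cases x) (auto simp: top_map_def dots_def upper_vertices_def)

lemma bot_map_lower: "x \<in> dots N \<Longrightarrow> bot_map x \<in> lower_vertices N"
  by (cases x) (auto simp: bot_map_def dots_def lower_vertices_def)

lemma outer_vertex_cases:
  "v \<in> upper_vertices N \<union> lower_vertices N \<Longrightarrow> fst v \<noteq> 1 \<Longrightarrow>
    (v \<in> upper_vertices N \<and> v \<notin> lower_vertices N) \<or> (v \<in> lower_vertices N \<and> v \<notin> upper_vertices N)"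
  by (auto simp: upper_vertices_def lower_vertices_def)

text \<open>In the graph of the concatenation every middle vertex has one edge from each of
the two diagrams and every outer vertex has exactly one edge. So the component of an
outer vertex is a path, traced by alternately following the two diagrams until the walk
leaves the middle row; it does so because the walk cannot revisit a state. A walk state
is a vertex together with the diagram (\<open>True\<close> for the upper one) to follow next.\<close>

locale diagram_pair =
  fixes N :: nat and d1 d2 :: diagram
  assumes brauer1: "brauer_diagram N d1" and brauer2: "brauer_diagram N d2"
begin

abbreviation "E \<equiv> comp_edges N d1 d2"

definition upper_partner :: "nat \<times> nat \<Rightarrow> nat \<times> nat" where
  "upper_partner v = top_map (d1 (upper_dot v))"

definition lower_partner :: "nat \<times> nat \<Rightarrow> nat \<times> nat" where
  "lower_partner v = bot_map (d2 (lower_dot v))"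

lemma upper_partner_upper: "v \<in> upper_vertices N \<Longrightarrow> upper_partner v \<in> upper_vertices N"
  unfolding upper_partner_def
  by (intro top_map_upper brauer_diagram_closed[OF brauer1] upper_dot_in_dots)

lemma lower_partner_lower: "v \<in> lower_vertices N \<Longrightarrow> lower_partner v \<in> lower_vertices N"
  unfolding lower_partner_def
  by (intro bot_map_lower brauer_diagram_closed[OF brauer2] lower_dot_in_dots)

lemma upper_partner_involution: "v \<in> upper_vertices N \<Longrightarrow> upper_partner (upper_partner v) = v"
  unfolding upper_partner_def
  by (metis upper_dot_top_map brauer_diagram_closed[OF brauer1] upper_dot_in_dots
      brauer_diagram_involution[OF brauer1] top_map_upper_dot)

lemma lower_partner_involution: "v \<in> lower_vertices N \<Longrightarrow> lower_partner (lower_partner v) = v"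
  unfolding lower_partner_def
  by (metis lower_dot_bot_map brauer_diagram_closed[OF brauer2] lower_dot_in_dots
      brauer_diagram_involution[OF brauer2] bot_map_lower_dot)

lemma upper_partner_neq: "v \<in> upper_vertices N \<Longrightarrow> upper_partner v \<noteq> v"
  unfolding upper_partner_def
  by (metis brauer_diagram_closed[OF brauer1] brauer_diagram_no_fixpoint[OF brauer1]
      upper_dot_in_dots upper_dot_top_map)

lemma lower_partner_neq: "v \<in> lower_vertices N \<Longrightarrow> lower_partner v \<noteq> v"
  unfolding lower_partner_def
  by (metis brauer_diagram_closed[OF brauer2] brauer_diagram_no_fixpoint[OF brauer2]
      lower_dot_in_dots lower_dot_bot_map)

lemma edge_iff:
  "(a, b) \<in> E \<longleftrightarrow>
    (a \<in> upper_vertices N \<and> b = upper_partner a) \<or> (a \<in> lower_vertices N \<and> b = lower_partner a)"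
proof
  assume "(a, b) \<in> E"
  then obtain x where x: "x \<in> dots N"
    and "a = top_map x \<and> b = top_map (d1 x) \<or> a = bot_map x \<and> b = bot_map (d2 x)"
    unfolding comp_edges_def by blast
  thus "(a \<in> upper_vertices N \<and> b = upper_partner a) \<or> (a \<in> lower_vertices N \<and> b = lower_partner a)"
    using upper_dot_top_map[OF x] lower_dot_bot_map[OF x] top_map_upper[OF x] bot_map_lower[OF x]
    by (auto simp: upper_partner_def lower_partner_def)
next
  assume "(a \<in> upper_vertices N \<and> b = upper_partner a) \<or> (a \<in> lower_vertices N \<and> b = lower_partner a)"
  thus "(a, b) \<in> E"
  proof (elim disjE conjE)
    assume "a \<in> upper_vertices N" "b = upper_partner a"
    hence "(a, b) = (top_map (upper_dot a), top_map (d1 (upper_dot a)))"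
      by (simp add: top_map_upper_dot upper_partner_def)
    thus ?thesis unfolding comp_edges_def using upper_dot_in_dots \<open>a \<in> upper_vertices N\<close> by blast
  next
    assume "a \<in> lower_vertices N" "b = lower_partner a"
    hence "(a, b) = (bot_map (lower_dot a), bot_map (d2 (lower_dot a)))"
      by (simp add: bot_map_lower_dot lower_partner_def)
    thus ?thesis unfolding comp_edges_def using lower_dot_in_dots \<open>a \<in> lower_vertices N\<close> by blast
  qed
qed

lemma edge_sym: "(a, b) \<in> E \<Longrightarrow> (b, a) \<in> E"
  unfolding edge_iff
  using upper_partner_upper lower_partner_lower upper_partner_involution lower_partner_involution
  by metis

lemma path_sym: "(a, b) \<in> E\<^sup>* \<Longrightarrow> (b, a) \<in> E\<^sup>*"
  by (induction rule: rtrancl_induct) (auto intro: converse_rtrancl_into_rtrancl edge_sym)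

lemma edge_outer_unique: "(a, b) \<in> E \<Longrightarrow> (a, c) \<in> E \<Longrightarrow> fst a \<noteq> 1 \<Longrightarrow> b = c"
  unfolding edge_iff using outer_vertex_cases[of a N] by blast

fun walk_step :: "(nat \<times> nat) \<times> bool \<Rightarrow> (nat \<times> nat) \<times> bool" where
  "walk_step (v, True) = (upper_partner v, False)"
| "walk_step (v, False) = (lower_partner v, True)"

definition walk_states :: "((nat \<times> nat) \<times> bool) set" where
  "walk_states = upper_vertices N \<times> {True} \<union> lower_vertices N \<times> {False}"

definition reverse_state :: "(nat \<times> nat) \<times> bool \<Rightarrow> (nat \<times> nat) \<times> bool" where
  "reverse_state s = (fst s, \<not> snd s)"

lemma finite_walk_states: "finite walk_states"
  by (auto simp: walk_states_def upper_vertices_def lower_vertices_def)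

lemma reverse_state_neq: "reverse_state s \<noteq> s"
  by (cases s) (auto simp: reverse_state_def)

lemma reverse_state_inj: "reverse_state s = reverse_state s' \<Longrightarrow> s = s'"
  by (cases s; cases s') (simp add: reverse_state_def)

lemma reverse_walk_step: "s \<in> walk_states \<Longrightarrow> reverse_state (walk_step s) \<in> walk_states"
  by (cases s; cases "snd s")
    (auto simp: walk_states_def reverse_state_def upper_partner_upper lower_partner_lower)

lemma walk_step_edge: "s \<in> walk_states \<Longrightarrow> (fst s, fst (walk_step s)) \<in> E"
  by (cases s; cases "snd s") (auto simp: walk_states_def edge_iff)

lemma walk_step_middle: "s \<in> walk_states \<Longrightarrow> fst (fst (walk_step s)) = 1 \<Longrightarrow> walk_step s \<in> walk_states"
  using reverse_walk_step[of s]
  by (cases "walk_step s") (auto simp: walk_states_def reverse_state_def upper_vertices_def lower_vertices_def)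

lemma walk_step_reverse: "s \<in> walk_states \<Longrightarrow> walk_step (reverse_state (walk_step s)) = reverse_state s"
  by (cases s; cases "snd s")
    (auto simp: walk_states_def reverse_state_def upper_partner_involution lower_partner_involution)

lemma walk_step_neq_reverse: "s \<in> walk_states \<Longrightarrow> walk_step s \<noteq> reverse_state s"
  by (cases s; cases "snd s") (auto simp: walk_states_def reverse_state_def upper_partner_neq lower_partner_neq)

lemma walk_step_inj: "s \<in> walk_states \<Longrightarrow> s' \<in> walk_states \<Longrightarrow> walk_step s = walk_step s' \<Longrightarrow> s = s'"
  by (metis walk_step_reverse reverse_state_inj)

definition walk_start :: "dot \<Rightarrow> (nat \<times> nat) \<times> bool" where
  "walk_start x = (out_map x, snd x = 1)"

definition walk :: "dot \<Rightarrow> nat \<Rightarrow> (nat \<times> nat) \<times> bool" where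
  "walk x i = (walk_step ^^ i) (walk_start x)"

abbreviation in_middle :: "dot \<Rightarrow> nat \<Rightarrow> bool" where
  "in_middle x i \<equiv> fst (fst (walk x i)) = 1"

lemma walk_0: "walk x 0 = walk_start x"
  by (simp add: walk_def)

lemma walk_Suc: "walk x (Suc i) = walk_step (walk x i)"
  by (simp add: walk_def)

lemma walk_start_state: "x \<in> dots N \<Longrightarrow> walk_start x \<in> walk_states"
  by (cases x) (auto simp: walk_start_def walk_states_def upper_vertices_def lower_vertices_def dots_def)

lemma walk_step_neq_walk_start:
  "x \<in> dots N \<Longrightarrow> s \<in> walk_states \<Longrightarrow> walk_step s \<noteq> walk_start x"
  using reverse_walk_step[of s]
  by (cases x) (auto simp: walk_start_def walk_states_def reverse_state_def
      upper_vertices_def lower_vertices_def dots_def)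

lemma walk_in_walk_states:
  "x \<in> dots N \<Longrightarrow> (\<And>i'. 0 < i' \<Longrightarrow> i' \<le> i \<Longrightarrow> in_middle x i') \<Longrightarrow> walk x i \<in> walk_states"
proof (induction i)
  case 0 thus ?case by (simp add: walk_0 walk_start_state)
next
  case (Suc i)
  have "walk x i \<in> walk_states" by (rule Suc.IH[OF Suc.prems(1)]) (simp add: Suc.prems(2))
  moreover have "in_middle x (Suc i)" using Suc.prems(2)[of "Suc i"] by simp
  ultimately show ?case using walk_step_middle by (simp add: walk_Suc)
qed

lemma walk_inj:
  assumes x: "x \<in> dots N"
  shows "(\<And>i'. 0 < i' \<Longrightarrow> i' < j \<Longrightarrow> in_middle x i') \<Longrightarrow> i < j \<Longrightarrow> walk x i \<noteq> walk x j"
proof (induction i arbitrary: j)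
  case 0
  then obtain j' where j: "j = Suc j'" by (cases j) auto
  have "walk x j' \<in> walk_states" using 0 j by (intro walk_in_walk_states[OF x]) auto
  thus ?case using walk_step_neq_walk_start[OF x] j by (metis walk_0 walk_Suc)
next
  case (Suc i)
  then obtain j' where j: "j = Suc j'" by (cases j) auto
  have "walk x i \<in> walk_states" "walk x j' \<in> walk_states"
    using Suc.prems j by (auto intro!: walk_in_walk_states[OF x])
  moreover have "walk x i \<noteq> walk x j'" using Suc.prems j by (intro Suc.IH) auto
  ultimately show ?case using walk_step_inj j by (metis walk_Suc)
qed

lemma walk_leaves_middle: "x \<in> dots N \<Longrightarrow> \<exists>k>0. \<not> in_middle x k"
proof (rule ccontr)
  assume x: "x \<in> dots N" and "\<not> (\<exists>k>0. \<not> in_middle x k)"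
  hence middle: "\<And>k. 0 < k \<Longrightarrow> in_middle x k" by blast
  let ?M = "card walk_states"
  have "inj_on (walk x) {0..?M}"
  proof (rule inj_onI)
    fix i j assume "walk x i = walk x j"
    thus "i = j" using walk_inj[OF x, of j i] walk_inj[OF x, of i j] middle
      by (cases i j rule: linorder_cases) auto
  qed
  moreover have "walk x ` {0..?M} \<subseteq> walk_states"
    using walk_in_walk_states[OF x] middle by blast
  ultimately have "card {0..?M} \<le> ?M"
    using card_inj_on_le finite_walk_states by blast
  thus False by simp
qed

definition exit_time :: "dot \<Rightarrow> nat" where
  "exit_time x = (LEAST k. 0 < k \<and> \<not> in_middle x k)"

lemma exit_time_spec: "x \<in> dots N \<Longrightarrow> 0 < exit_time x \<and> \<not> in_middle x (exit_time x)"
  unfolding exit_time_def by (rule LeastI_ex) (rule walk_leaves_middle)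

lemma in_middle_before_exit_time: "0 < i \<Longrightarrow> i < exit_time x \<Longrightarrow> in_middle x i"
  unfolding exit_time_def using not_less_Least by blast

lemma walk_in_walk_states_before_exit: "x \<in> dots N \<Longrightarrow> i < exit_time x \<Longrightarrow> walk x i \<in> walk_states"
  by (intro walk_in_walk_states in_middle_before_exit_time) auto

lemma walk_edge: "x \<in> dots N \<Longrightarrow> i < exit_time x \<Longrightarrow> (fst (walk x i), fst (walk x (Suc i))) \<in> E"
  unfolding walk_Suc by (rule walk_step_edge[OF walk_in_walk_states_before_exit])

lemma walk_path: "x \<in> dots N \<Longrightarrow> i \<le> exit_time x \<Longrightarrow> (out_map x, fst (walk x i)) \<in> E\<^sup>*"
proof (induction i)
  case 0 thus ?case by (simp add: walk_0 walk_start_def)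
next
  case (Suc i)
  thus ?case using walk_edge[of x i] by (auto intro: rtrancl_into_rtrancl)
qed

lemma walk_exit_reverse:
  assumes x: "x \<in> dots N" shows "reverse_state (walk x (exit_time x)) \<in> walk_states"
proof -
  obtain k where k: "exit_time x = Suc k" using exit_time_spec[OF x] gr0_implies_Suc by blast
  show ?thesis unfolding k walk_Suc by (rule reverse_walk_step[OF walk_in_walk_states_before_exit[OF x]]) (simp add: k)
qed

text \<open>If the walk returned to its starting vertex it would be a palindrome, and its
middle state would be its own reverse.\<close>

lemma walk_palindrome:
  assumes x: "x \<in> dots N" and returns: "fst (walk x (exit_time x)) = out_map x"
  shows "t \<le> exit_time x \<Longrightarrow> walk x t = reverse_state (walk x (exit_time x - t))"
proof (induction t)
  case 0
  have "reverse_state (walk x (exit_time x)) \<in> walk_states" by (rule walk_exit_reverse[OF x])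
  hence "snd (walk x (exit_time x)) = (\<not> snd (walk_start x))"
    using returns x by (cases x) (auto simp: walk_start_def reverse_state_def walk_states_def
        upper_vertices_def lower_vertices_def dots_def)
  thus ?case using returns by (simp add: walk_0 reverse_state_def walk_start_def prod_eq_iff)
next
  case (Suc t)
  have e: "exit_time x - t = Suc (exit_time x - Suc t)" using Suc by simp
  have "walk x (exit_time x - Suc t) \<in> walk_states"
    using walk_in_walk_states_before_exit[OF x] Suc.prems exit_time_spec[OF x] by auto
  thus ?case using Suc e by (simp add: walk_Suc walk_step_reverse)
qed

lemma walk_exit_neq_start: "x \<in> dots N \<Longrightarrow> fst (walk x (exit_time x)) \<noteq> out_map x"
proof
  assume x: "x \<in> dots N" and returns: "fst (walk x (exit_time x)) = out_map x"
  show False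
  proof (cases "even (exit_time x)")
    case True
    then obtain t where "exit_time x = 2 * t" by blast
    hence "walk x t = reverse_state (walk x t)" using walk_palindrome[OF x returns, of t] by simp
    thus False using reverse_state_neq by metis
  next
    case False
    then obtain t where t: "exit_time x = 2 * t + 1" using oddE by blast
    have "walk x (Suc t) = reverse_state (walk x t)" using walk_palindrome[OF x returns, of "Suc t"] t by simp
    moreover have "walk x t \<in> walk_states" using walk_in_walk_states_before_exit[OF x] t by simp
    ultimately show False using walk_step_neq_reverse walk_Suc by metis
  qed
qed

definition walk_vertices :: "dot \<Rightarrow> (nat \<times> nat) set" where
  "walk_vertices x = {fst (walk x i) | i. i \<le> exit_time x}"

lemma walk_vertices_closed:
  assumes x: "x \<in> dots N" and a: "a \<in> walk_vertices x" and ab: "(a, b) \<in> E"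
  shows "b \<in> walk_vertices x"
proof -
  obtain i where i: "i \<le> exit_time x" "a = fst (walk x i)" using a unfolding walk_vertices_def by blast
  have k: "0 < exit_time x" "\<not> in_middle x (exit_time x)" using exit_time_spec[OF x] by auto
  have visited: "\<And>i. i \<le> exit_time x \<Longrightarrow> fst (walk x i) \<in> walk_vertices x"
    unfolding walk_vertices_def by blast
  consider "i = 0" | "0 < i \<and> i < exit_time x" | "i = exit_time x" using i by linarith
  thus ?thesis
  proof cases
    case 1
    have "fst a \<noteq> 1" using i 1 by (cases x) (auto simp: walk_0 walk_start_def out_map_def)
    hence "b = fst (walk x 1)" using edge_outer_unique[OF ab] walk_edge[OF x, of 0] i 1 k by simp
    thus ?thesis using visited k by simp
  next
    case 2
    then obtain i' where i': "i = Suc i'" by (cases i) auto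
    have "walk x i' \<in> walk_states" using walk_in_walk_states_before_exit[OF x] 2 i' by simp
    hence "{fst (walk x i'), fst (walk x (Suc i))} = {upper_partner a, lower_partner a}"
      using i i' by (cases "walk x i'"; cases "snd (walk x i')")
        (auto simp: walk_Suc walk_states_def upper_partner_involution lower_partner_involution)
    moreover have "b = upper_partner a \<or> b = lower_partner a" using ab edge_iff by blast
    ultimately have "b \<in> {fst (walk x i'), fst (walk x (Suc i))}" by auto
    thus ?thesis using visited[of "Suc i"] visited[of i'] 2 i' by auto
  next
    case 3
    then obtain k' where k': "exit_time x = Suc k'" using k by (cases "exit_time x") auto
    have "(a, fst (walk x k')) \<in> E" using walk_edge[OF x, of k'] k' i 3 by (auto intro: edge_sym)
    hence "b = fst (walk x k')" using edge_outer_unique[OF ab] k i 3 by simp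
    thus ?thesis using visited k' by simp
  qed
qed

lemma reachable_walk_vertices:
  assumes x: "x \<in> dots N" shows "(out_map x, b) \<in> E\<^sup>* \<Longrightarrow> b \<in> walk_vertices x"
proof (induction rule: rtrancl_induct)
  case base
  show ?case unfolding walk_vertices_def by (rule CollectI, rule exI[of _ 0]) (simp add: walk_0 walk_start_def)
next
  case (step y z) thus ?case using walk_vertices_closed[OF x] by blast
qed

definition walk_end :: "dot \<Rightarrow> dot" where
  "walk_end x = (let v = fst (walk x (exit_time x)) in (snd v, if fst v = 0 then 1 else 0))"

lemma walk_end: "x \<in> dots N \<Longrightarrow> walk_end x \<in> dots N \<and> out_map (walk_end x) = fst (walk x (exit_time x))"
proof -
  assume x: "x \<in> dots N"
  obtain r c where rc: "fst (walk x (exit_time x)) = (r, c)" by (cases "fst (walk x (exit_time x))") auto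
  have "r \<noteq> 1" using exit_time_spec[OF x] rc by simp
  moreover have "(r, c) \<in> upper_vertices N \<union> lower_vertices N"
    using walk_exit_reverse[OF x] rc by (auto simp: reverse_state_def walk_states_def)
  ultimately have "r = 0 \<or> r = 2" "1 \<le> c \<and> c \<le> N"
    by (auto simp: upper_vertices_def lower_vertices_def)
  thus ?thesis unfolding walk_end_def Let_def rc by (auto simp: dots_def out_map_def)
qed

lemma compose_partner_unique:
  assumes x: "x \<in> dots N" shows "\<exists>!y. y \<in> dots N \<and> y \<noteq> x \<and> (out_map x, out_map y) \<in> E\<^sup>*"
proof (rule ex1I)
  show "walk_end x \<in> dots N \<and> walk_end x \<noteq> x \<and> (out_map x, out_map (walk_end x)) \<in> E\<^sup>*"
    using walk_end[OF x] walk_exit_neq_start[OF x] walk_path[OF x, of "exit_time x"] by auto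
  fix y assume y: "y \<in> dots N \<and> y \<noteq> x \<and> (out_map x, out_map y) \<in> E\<^sup>*"
  then obtain i where i: "i \<le> exit_time x" "out_map y = fst (walk x i)"
    using reachable_walk_vertices[OF x] unfolding walk_vertices_def by blast
  have "fst (out_map y) \<noteq> 1" by (cases y) (auto simp: out_map_def)
  hence "i = 0 \<or> i = exit_time x" using i in_middle_before_exit_time[of i x] by fastforce
  moreover have "i \<noteq> 0"
  proof
    assume "i = 0"
    hence "out_map y = out_map x" using i by (simp add: walk_0 walk_start_def)
    thus False using out_map_inj[of y N x] x y by auto
  qed
  ultimately have "out_map y = out_map (walk_end x)" using i walk_end[OF x] by auto
  thus "y = walk_end x" using out_map_inj[of y N "walk_end x"] y walk_end[OF x] by simp
qed

lemma compose_eqI_path: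
  "x \<in> dots N \<Longrightarrow> y \<in> dots N \<Longrightarrow> y \<noteq> x \<Longrightarrow> (out_map x, out_map y) \<in> E\<^sup>* \<Longrightarrow> compose N d1 d2 x = y"
  unfolding compose_def using compose_partner_unique by (simp add: the1_equality)

lemma compose_partner:
  "x \<in> dots N \<Longrightarrow>
    compose N d1 d2 x \<in> dots N \<and> compose N d1 d2 x \<noteq> x \<and> (out_map x, out_map (compose N d1 d2 x)) \<in> E\<^sup>*"
  using compose_partner_unique compose_eqI_path by metis

lemma compose_is_brauer_diagram: "brauer_diagram N (compose N d1 d2)"
  unfolding brauer_diagram_def
proof (intro conjI ballI allI impI)
  fix x assume x: "x \<in> dots N"
  show "compose N d1 d2 x \<in> dots N" "compose N d1 d2 x \<noteq> x" using compose_partner[OF x] by auto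
  show "compose N d1 d2 (compose N d1 d2 x) = x"
    using compose_partner[OF x] x by (intro compose_eqI_path) (auto intro: path_sym)
next
  fix x assume "x \<notin> dots N" thus "compose N d1 d2 x = x" by (simp add: compose_def)
qed

end

lemmas brauer_diagram_compose = diagram_pair.compose_is_brauer_diagram[OF diagram_pair.intro]

lemma comp_paths_sym:
  "brauer_diagram N A \<Longrightarrow> brauer_diagram N B \<Longrightarrow>
    (a, b) \<in> (comp_edges N A B)\<^sup>* \<Longrightarrow> (b, a) \<in> (comp_edges N A B)\<^sup>*"
  by (rule diagram_pair.path_sym[OF diagram_pair.intro])

lemma upper_edge: "x \<in> dots N \<Longrightarrow> (top_map x, top_map (A x)) \<in> comp_edges N A B"
  and lower_edge: "x \<in> dots N \<Longrightarrow> (bot_map x, bot_map (B x)) \<in> comp_edges N A B"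
  unfolding comp_edges_def by blast+

lemma compose_eqI:
  assumes A: "brauer_diagram N A" and B: "brauer_diagram N B" and d: "brauer_diagram N d"
    and paths: "\<And>x. x \<in> dots N \<Longrightarrow> (out_map x, out_map (d x)) \<in> (comp_edges N A B)\<^sup>*"
  shows "compose N A B = d"
proof
  interpret diagram_pair N A B using A B by unfold_locales
  fix x show "compose N A B x = d x"
  proof (cases "x \<in> dots N")
    case True
    thus ?thesis using compose_eqI_path brauer_diagram_closed[OF d] brauer_diagram_no_fixpoint[OF d] paths
      by blast
  next
    case False thus ?thesis using brauer_diagram_outside[OF d False] by (simp add: compose_def)
  qed
qed

lemma finite_brauer_diagrams: "finite {d. brauer_diagram N d}"
proof -
  let ?A = "dots N"
  define restrict where "restrict = (\<lambda>f :: diagram. \<lambda>x. if x \<in> ?A then f x else undefined)"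
  have fA: "finite ?A" by (simp add: dots_def)
  have "restrict ` {d. brauer_diagram N d} \<subseteq>
      {f. \<forall>x. (x \<in> ?A \<longrightarrow> f x \<in> ?A) \<and> (x \<notin> ?A \<longrightarrow> f x = undefined)}"
    by (auto simp: restrict_def brauer_diagram_def)
  hence "finite (restrict ` {d. brauer_diagram N d})"
    using finite_set_of_finite_funs[OF fA fA] finite_subset by blast
  moreover have "inj_on restrict {d. brauer_diagram N d}"
  proof (rule inj_onI, rule ext)
    fix f g x assume f: "f \<in> {d. brauer_diagram N d}" and g: "g \<in> {d. brauer_diagram N d}"
      and eq: "restrict f = restrict g"
    show "f x = g x"
    proof (cases "x \<in> ?A")
      case True thus ?thesis using fun_cong[OF eq, of x] by (simp add: restrict_def)
    next
      case False thus ?thesis using f g by (simp add: brauer_diagram_outside)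
    qed
  qed
  ultimately show ?thesis using finite_imageD by blast
qed

lemma br_mult_basis_elem:
  assumes a: "brauer_diagram N a" and b: "brauer_diagram N b"
  shows "br_mult N (basis_elem a) (basis_elem b) =
    (\<lambda>d. if d = compose N a b then delta ^ loops N a b else 0)"
proof
  fix d
  let ?S = "{(d1, d2). brauer_diagram N d1 \<and> brauer_diagram N d2 \<and> compose N d1 d2 = d}"
  have fin: "finite ?S"
    by (rule finite_subset[of _ "{d. brauer_diagram N d} \<times> {d. brauer_diagram N d}"])
      (auto simp: finite_brauer_diagrams)
  have "br_mult N (basis_elem a) (basis_elem b) d =
      (\<Sum>p\<in>?S. if p = (a, b) then delta ^ loops N a b else 0)"
    unfolding br_mult_def by (rule sum.cong) (auto simp: basis_elem_def split: if_splits)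
  also have "\<dots> = (if (a, b) \<in> ?S then delta ^ loops N a b else 0)"
    using sum.delta[OF fin, of "(a, b)" "\<lambda>_. delta ^ loops N a b"] by simp
  finally show "br_mult N (basis_elem a) (basis_elem b) d =
      (if d = compose N a b then delta ^ loops N a b else 0)"
    using a b by auto
qed


section \<open>Reflection and the up-down flip\<close>

lemma rtrancl_map:
  assumes "\<And>a b. (a, b) \<in> R \<Longrightarrow> (f a, f b) \<in> S"
  shows "(a, b) \<in> R\<^sup>* \<Longrightarrow> (f a, f b) \<in> S\<^sup>*"
  by (induction rule: rtrancl_induct) (auto intro: rtrancl_into_rtrancl assms)

lemma reflect_in_dots: "x \<in> dots N \<Longrightarrow> reflect N x \<in> dots N"
  by (cases x) (auto simp: reflect_def dots_def)

lemma reflect_involution: "x \<in> dots N \<Longrightarrow> reflect N (reflect N x) = x"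
  by (cases x) (auto simp: reflect_def dots_def)

definition reflect_vertex :: "nat \<Rightarrow> nat \<times> nat \<Rightarrow> nat \<times> nat" where
  "reflect_vertex N = (\<lambda>(r, j). (r, N + 1 - j))"

lemma comp_edges_reflect:
  assumes s1: "symmetric_diag N d1" and s2: "symmetric_diag N d2"
    and e: "(a, b) \<in> comp_edges N d1 d2"
  shows "(reflect_vertex N a, reflect_vertex N b) \<in> comp_edges N d1 d2"
proof -
  have top: "\<And>z. reflect_vertex N (top_map z) = top_map (reflect N z)"
    and bot: "\<And>z. reflect_vertex N (bot_map z) = bot_map (reflect N z)"
    by (auto simp: reflect_vertex_def top_map_def bot_map_def reflect_def split: prod.splits)
  from e obtain x where x: "x \<in> dots N"
    and "a = top_map x \<and> b = top_map (d1 x) \<or> a = bot_map x \<and> b = bot_map (d2 x)"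
    unfolding comp_edges_def by blast
  thus ?thesis
  proof (elim disjE conjE)
    assume "a = top_map x" "b = top_map (d1 x)"
    hence "(reflect_vertex N a, reflect_vertex N b) = (top_map (reflect N x), top_map (d1 (reflect N x)))"
      using s1 x by (simp add: top symmetric_diag_def)
    thus ?thesis unfolding comp_edges_def using reflect_in_dots[OF x] by blast
  next
    assume "a = bot_map x" "b = bot_map (d2 x)"
    hence "(reflect_vertex N a, reflect_vertex N b) = (bot_map (reflect N x), bot_map (d2 (reflect N x)))"
      using s2 x by (simp add: bot symmetric_diag_def)
    thus ?thesis unfolding comp_edges_def using reflect_in_dots[OF x] by blast
  qed
qed

lemma symmetric_diag_compose:
  assumes b1: "brauer_diagram N d1" and b2: "brauer_diagram N d2"
    and s1: "symmetric_diag N d1" and s2: "symmetric_diag N d2"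
  shows "symmetric_diag N (compose N d1 d2)"
  unfolding symmetric_diag_def
proof
  interpret diagram_pair N d1 d2 using b1 b2 by unfold_locales
  fix x assume x: "x \<in> dots N"
  let ?y = "compose N d1 d2 x"
  have y: "?y \<in> dots N" "?y \<noteq> x" "(out_map x, out_map ?y) \<in> E\<^sup>*"
    using compose_partner[OF x] by auto
  have "\<And>z. reflect_vertex N (out_map z) = out_map (reflect N z)"
    by (auto simp: reflect_vertex_def out_map_def reflect_def split: prod.splits)
  hence "(out_map (reflect N x), out_map (reflect N ?y)) \<in> E\<^sup>*"
    using rtrancl_map[where f = "reflect_vertex N", OF comp_edges_reflect[OF s1 s2] y(3)] by simp
  moreover have "reflect N ?y \<noteq> reflect N x" using y(1,2) x reflect_involution by metis
  ultimately show "compose N d1 d2 (reflect N x) = reflect N ?y"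
    using y(1) x by (intro compose_eqI_path) (auto simp: reflect_in_dots)
qed

definition flip_dot :: "dot \<Rightarrow> dot" where
  "flip_dot = (\<lambda>(j, e). (j, 1 - e))"

definition flip_diag :: "nat \<Rightarrow> diagram \<Rightarrow> diagram" where
  "flip_diag N d = (\<lambda>x. if x \<in> dots N then flip_dot (d (flip_dot x)) else x)"

lemma flip_dot_in_dots: "x \<in> dots N \<Longrightarrow> flip_dot x \<in> dots N"
  by (cases x) (auto simp: flip_dot_def dots_def)

lemma flip_dot_involution: "x \<in> dots N \<Longrightarrow> flip_dot (flip_dot x) = x"
  by (cases x) (auto simp: flip_dot_def dots_def)

lemma flip_dot_reflect: "flip_dot (reflect N x) = reflect N (flip_dot x)"
  by (cases x) (simp add: flip_dot_def reflect_def)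

lemma brauer_diagram_flip_diag: "brauer_diagram N d \<Longrightarrow> brauer_diagram N (flip_diag N d)"
  unfolding brauer_diagram_def flip_diag_def
  by (auto simp: flip_dot_in_dots flip_dot_involution) (metis flip_dot_in_dots flip_dot_involution)+

lemma flip_diag_involution:
  assumes b: "brauer_diagram N d" shows "flip_diag N (flip_diag N d) = d"
proof
  fix x show "flip_diag N (flip_diag N d) x = d x"
    using brauer_diagram_closed[OF b, of x] brauer_diagram_outside[OF b, of x]
    by (cases "x \<in> dots N") (simp_all add: flip_diag_def flip_dot_in_dots flip_dot_involution)
qed

lemma symmetric_diag_flip_diag:
  assumes s: "symmetric_diag N d" shows "symmetric_diag N (flip_diag N d)"
  unfolding symmetric_diag_def
proof
  fix x assume x: "x \<in> dots N"
  have "flip_diag N d (reflect N x) = flip_dot (d (reflect N (flip_dot x)))"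
    using reflect_in_dots[OF x] by (simp add: flip_diag_def flip_dot_reflect)
  also have "\<dots> = reflect N (flip_dot (d (flip_dot x)))"
    using s flip_dot_in_dots[OF x] by (simp add: symmetric_diag_def flip_dot_reflect)
  finally show "flip_diag N d (reflect N x) = reflect N (flip_diag N d x)"
    using x by (simp add: flip_diag_def)
qed

lemma flip_diag_eqI:
  "(\<And>k e. (k, e) \<notin> dots N \<Longrightarrow> d (k, e) = (k, e)) \<Longrightarrow>
    (\<And>k e. (k, e) \<in> dots N \<Longrightarrow> flip_dot (d (flip_dot (k, e))) = d (k, e)) \<Longrightarrow> flip_diag N d = d"
  by (rule ext) (auto simp: flip_diag_def)

lemma flip_id_diag: "flip_diag N (id_diag N) = id_diag N"
  by (rule flip_diag_eqI) (auto simp: id_diag_def flip_dot_def dots_def)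

definition flip_vertex :: "nat \<times> nat \<Rightarrow> nat \<times> nat" where
  "flip_vertex = (\<lambda>(r, j). (2 - r, j))"

lemma comp_edges_flip:
  assumes b1: "brauer_diagram N d1" and b2: "brauer_diagram N d2"
    and e: "(a, b) \<in> comp_edges N d1 d2"
  shows "(flip_vertex a, flip_vertex b) \<in> comp_edges N (flip_diag N d2) (flip_diag N d1)"
proof -
  have bot_top: "\<And>z. z \<in> dots N \<Longrightarrow> flip_vertex (bot_map z) = top_map (flip_dot z)"
    and top_bot: "\<And>z. z \<in> dots N \<Longrightarrow> flip_vertex (top_map z) = bot_map (flip_dot z)"
    by (auto simp: flip_vertex_def bot_map_def top_map_def flip_dot_def dots_def)
  from e obtain x where x: "x \<in> dots N"
    and "a = top_map x \<and> b = top_map (d1 x) \<or> a = bot_map x \<and> b = bot_map (d2 x)"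
    unfolding comp_edges_def by blast
  thus ?thesis
  proof (elim disjE conjE)
    assume "a = top_map x" "b = top_map (d1 x)"
    moreover have "flip_diag N d1 (flip_dot x) = flip_dot (d1 x)"
      using x by (simp add: flip_diag_def flip_dot_in_dots flip_dot_involution)
    ultimately have "flip_vertex a = bot_map (flip_dot x)" "flip_vertex b = bot_map (flip_diag N d1 (flip_dot x))"
      using x top_bot brauer_diagram_closed[OF b1 x] by auto
    thus ?thesis unfolding comp_edges_def using flip_dot_in_dots[OF x] by blast
  next
    assume "a = bot_map x" "b = bot_map (d2 x)"
    moreover have "flip_diag N d2 (flip_dot x) = flip_dot (d2 x)"
      using x by (simp add: flip_diag_def flip_dot_in_dots flip_dot_involution)
    ultimately have "flip_vertex a = top_map (flip_dot x)" "flip_vertex b = top_map (flip_diag N d2 (flip_dot x))"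
      using x bot_top brauer_diagram_closed[OF b2 x] by auto
    thus ?thesis unfolding comp_edges_def using flip_dot_in_dots[OF x] by blast
  qed
qed

lemma compose_flip_diag:
  assumes b1: "brauer_diagram N d1" and b2: "brauer_diagram N d2"
  shows "compose N (flip_diag N d2) (flip_diag N d1) = flip_diag N (compose N d1 d2)"
proof (rule compose_eqI)
  show "brauer_diagram N (flip_diag N d2)" "brauer_diagram N (flip_diag N d1)"
    "brauer_diagram N (flip_diag N (compose N d1 d2))"
    using b1 b2 by (simp_all add: brauer_diagram_flip_diag brauer_diagram_compose)
  interpret diagram_pair N d1 d2 using b1 b2 by unfold_locales
  fix x assume x: "x \<in> dots N"
  let ?y = "compose N d1 d2 (flip_dot x)"
  have y: "?y \<in> dots N" "(out_map (flip_dot x), out_map ?y) \<in> E\<^sup>*"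
    using compose_partner[OF flip_dot_in_dots[OF x]] by auto
  have out_flip: "\<And>z. z \<in> dots N \<Longrightarrow> flip_vertex (out_map z) = out_map (flip_dot z)"
    by (auto simp: flip_vertex_def out_map_def flip_dot_def dots_def)
  have "(flip_vertex (out_map (flip_dot x)), flip_vertex (out_map ?y))
      \<in> (comp_edges N (flip_diag N d2) (flip_diag N d1))\<^sup>*"
    by (rule rtrancl_map[where f = flip_vertex, OF comp_edges_flip[OF b1 b2] y(2)])
  thus "(out_map x, out_map (flip_diag N (compose N d1 d2) x))
      \<in> (comp_edges N (flip_diag N d2) (flip_diag N d1))\<^sup>*"
    using out_flip[OF flip_dot_in_dots[OF x]] out_flip[OF y(1)] flip_dot_involution[OF x] x
    by (simp add: flip_diag_def)
qed


section \<open>Permutation diagrams\<close>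

definition involution_on :: "nat \<Rightarrow> (nat \<Rightarrow> nat) \<Rightarrow> bool" where
  "involution_on N \<pi> \<longleftrightarrow> (\<forall>k. 1 \<le> k \<and> k \<le> N \<longrightarrow> 1 \<le> \<pi> k \<and> \<pi> k \<le> N \<and> \<pi> (\<pi> k) = k)"

definition perm_diag :: "nat \<Rightarrow> (nat \<Rightarrow> nat) \<Rightarrow> diagram" where
  "perm_diag N \<pi> = (\<lambda>(k, e). if (k, e) \<in> dots N then (\<pi> k, 1 - e) else (k, e))"

definition perm_bottom :: "(nat \<Rightarrow> nat) \<Rightarrow> dot \<Rightarrow> dot" where
  "perm_bottom \<pi> = (\<lambda>(k, e). (if e = 0 then \<pi> k else k, e))"

definition perm_top :: "(nat \<Rightarrow> nat) \<Rightarrow> dot \<Rightarrow> dot" where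
  "perm_top \<pi> = (\<lambda>(k, e). (if e = 1 then \<pi> k else k, e))"

definition relabel_bottom :: "nat \<Rightarrow> (nat \<Rightarrow> nat) \<Rightarrow> diagram \<Rightarrow> diagram" where
  "relabel_bottom N \<pi> d = (\<lambda>x. if x \<in> dots N then perm_bottom \<pi> (d (perm_bottom \<pi> x)) else x)"

definition relabel_top :: "nat \<Rightarrow> (nat \<Rightarrow> nat) \<Rightarrow> diagram \<Rightarrow> diagram" where
  "relabel_top N \<pi> d = (\<lambda>x. if x \<in> dots N then perm_top \<pi> (d (perm_top \<pi> x)) else x)"

lemma perm_bottom_in_dots: "involution_on N \<pi> \<Longrightarrow> x \<in> dots N \<Longrightarrow> perm_bottom \<pi> x \<in> dots N"
  by (cases x) (auto simp: perm_bottom_def involution_on_def dots_def)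

lemma perm_bottom_involution: "involution_on N \<pi> \<Longrightarrow> x \<in> dots N \<Longrightarrow> perm_bottom \<pi> (perm_bottom \<pi> x) = x"
  by (cases x) (auto simp: perm_bottom_def involution_on_def dots_def)

lemma perm_top_in_dots: "involution_on N \<pi> \<Longrightarrow> x \<in> dots N \<Longrightarrow> perm_top \<pi> x \<in> dots N"
  by (cases x) (auto simp: perm_top_def involution_on_def dots_def)

lemma perm_top_involution: "involution_on N \<pi> \<Longrightarrow> x \<in> dots N \<Longrightarrow> perm_top \<pi> (perm_top \<pi> x) = x"
  by (cases x) (auto simp: perm_top_def involution_on_def dots_def)

lemma brauer_diagram_perm_diag: "involution_on N \<pi> \<Longrightarrow> brauer_diagram N (perm_diag N \<pi>)"
  unfolding brauer_diagram_def perm_diag_def involution_on_def by (auto simp: dots_def)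

lemma brauer_diagram_relabel_bottom:
  "involution_on N \<pi> \<Longrightarrow> brauer_diagram N d \<Longrightarrow> brauer_diagram N (relabel_bottom N \<pi> d)"
  unfolding brauer_diagram_def relabel_bottom_def
  by (auto simp: perm_bottom_in_dots perm_bottom_involution) (metis perm_bottom_in_dots perm_bottom_involution)+

lemma brauer_diagram_relabel_top:
  "involution_on N \<pi> \<Longrightarrow> brauer_diagram N d \<Longrightarrow> brauer_diagram N (relabel_top N \<pi> d)"
  unfolding brauer_diagram_def relabel_top_def
  by (auto simp: perm_top_in_dots perm_top_involution) (metis perm_top_in_dots perm_top_involution)+

lemma relabel_bottom_involution:
  "involution_on N \<pi> \<Longrightarrow> brauer_diagram N d \<Longrightarrow> relabel_bottom N \<pi> (relabel_bottom N \<pi> d) = d"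
  by (rule ext) (auto simp: relabel_bottom_def perm_bottom_in_dots perm_bottom_involution
      brauer_diagram_closed brauer_diagram_outside)

lemma relabel_top_involution:
  "involution_on N \<pi> \<Longrightarrow> brauer_diagram N d \<Longrightarrow> relabel_top N \<pi> (relabel_top N \<pi> d) = d"
  by (rule ext) (auto simp: relabel_top_def perm_top_in_dots perm_top_involution
      brauer_diagram_closed brauer_diagram_outside)

lemma comp_path_perm_diag_in:
  assumes p: "involution_on N \<pi>" and x: "x \<in> dots N"
  shows "(out_map x, top_map (perm_bottom \<pi> x)) \<in> (comp_edges N d (perm_diag N \<pi>))\<^sup>*"
proof -
  obtain k e where xk: "x = (k, e)" and k: "1 \<le> k" "k \<le> N" "e = 0 \<or> e = 1"
    using x by (cases x) (auto simp: dots_def)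
  show ?thesis
  proof (cases "e = 0")
    case True
    have "1 \<le> \<pi> k" "\<pi> k \<le> N" using p k by (auto simp: involution_on_def)
    thus ?thesis using lower_edge[OF x, of "perm_diag N \<pi>" d] xk k True
      by (auto simp: perm_diag_def perm_bottom_def dots_def)
  qed (use xk k in \<open>auto simp: perm_bottom_def\<close>)
qed

lemma comp_path_perm_diag_out:
  assumes p: "involution_on N \<pi>" and y: "y \<in> dots N"
  shows "(top_map y, out_map (perm_bottom \<pi> y)) \<in> (comp_edges N d (perm_diag N \<pi>))\<^sup>*"
proof -
  obtain q f where yq: "y = (q, f)" and q: "1 \<le> q" "q \<le> N" "f = 0 \<or> f = 1"
    using y by (cases y) (auto simp: dots_def)
  show ?thesis
  proof (cases "f = 0")
    case True
    have "(q, 1) \<in> dots N" using q by (simp add: dots_def)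
    thus ?thesis using lower_edge[of "(q, 1)" N "perm_diag N \<pi>" d] yq True
      by (auto simp: perm_diag_def perm_bottom_def)
  qed (use yq q in \<open>auto simp: perm_bottom_def\<close>)
qed

lemma compose_perm_diag_right:
  assumes p: "involution_on N \<pi>" and b: "brauer_diagram N d"
  shows "compose N d (perm_diag N \<pi>) = relabel_bottom N \<pi> d"
proof (rule compose_eqI[OF b brauer_diagram_perm_diag[OF p] brauer_diagram_relabel_bottom[OF p b]])
  fix x assume x: "x \<in> dots N"
  let ?y = "d (perm_bottom \<pi> x)"
  have "(out_map x, top_map (perm_bottom \<pi> x)) \<in> (comp_edges N d (perm_diag N \<pi>))\<^sup>*"
    by (rule comp_path_perm_diag_in[OF p x])
  also have "(top_map (perm_bottom \<pi> x), top_map ?y) \<in> comp_edges N d (perm_diag N \<pi>)"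
    by (rule upper_edge[OF perm_bottom_in_dots[OF p x]])
  also have "(top_map ?y, out_map (perm_bottom \<pi> ?y)) \<in> (comp_edges N d (perm_diag N \<pi>))\<^sup>*"
    by (rule comp_path_perm_diag_out[OF p brauer_diagram_closed[OF b perm_bottom_in_dots[OF p x]]])
  finally show "(out_map x, out_map (relabel_bottom N \<pi> d x)) \<in> (comp_edges N d (perm_diag N \<pi>))\<^sup>*"
    using x by (simp add: relabel_bottom_def)
qed

lemma flip_perm_diag:
  assumes p: "involution_on N \<pi>" shows "flip_diag N (perm_diag N \<pi>) = perm_diag N \<pi>"
proof (rule flip_diag_eqI)
  fix k e
  show "(k, e) \<notin> dots N \<Longrightarrow> perm_diag N \<pi> (k, e) = (k, e)" by (simp add: perm_diag_def)
  assume "(k, e) \<in> dots N"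
  moreover from this have "1 \<le> \<pi> k" "\<pi> k \<le> N" using p by (auto simp: involution_on_def dots_def)
  ultimately show "flip_dot (perm_diag N \<pi> (flip_dot (k, e))) = perm_diag N \<pi> (k, e)"
    by (auto simp: perm_diag_def flip_dot_def dots_def)
qed

lemma flip_relabel_bottom:
  assumes p: "involution_on N \<pi>" and b: "brauer_diagram N d"
  shows "flip_diag N (relabel_bottom N \<pi> (flip_diag N d)) = relabel_top N \<pi> d"
proof
  fix x show "flip_diag N (relabel_bottom N \<pi> (flip_diag N d)) x = relabel_top N \<pi> d x"
  proof (cases "x \<in> dots N")
    case False thus ?thesis by (simp add: flip_diag_def relabel_top_def)
  next
    case x: True
    have flip_perm: "\<And>y. y \<in> dots N \<Longrightarrow> perm_bottom \<pi> (flip_dot y) = flip_dot (perm_top \<pi> y)"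
      by (auto simp: perm_bottom_def flip_dot_def perm_top_def dots_def)
    have sx: "perm_top \<pi> x \<in> dots N" by (rule perm_top_in_dots[OF p x])
    have dx: "d (perm_top \<pi> x) \<in> dots N" by (rule brauer_diagram_closed[OF b sx])
    show ?thesis
      using x flip_dot_in_dots[OF x] perm_bottom_in_dots[OF p flip_dot_in_dots[OF x]] flip_perm[OF x]
        flip_dot_in_dots[OF sx] flip_dot_involution[OF sx] flip_perm[OF dx] flip_dot_involution
        flip_dot_in_dots[OF dx] perm_top_in_dots[OF p dx]
      by (simp add: flip_diag_def relabel_bottom_def relabel_top_def)
  qed
qed

lemma compose_perm_diag_left:
  assumes p: "involution_on N \<pi>" and b: "brauer_diagram N d"
  shows "compose N (perm_diag N \<pi>) d = relabel_top N \<pi> d"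
proof -
  have fb: "brauer_diagram N (flip_diag N d)" by (rule brauer_diagram_flip_diag[OF b])
  have "compose N (perm_diag N \<pi>) d = compose N (flip_diag N (perm_diag N \<pi>)) (flip_diag N (flip_diag N d))"
    using flip_perm_diag[OF p] flip_diag_involution[OF b] by simp
  also have "\<dots> = flip_diag N (compose N (flip_diag N d) (perm_diag N \<pi>))"
    by (rule compose_flip_diag[OF fb brauer_diagram_perm_diag[OF p]])
  also have "\<dots> = relabel_top N \<pi> d"
    using compose_perm_diag_right[OF p fb] flip_relabel_bottom[OF p b] by simp
  finally show ?thesis .
qed

lemma relabel_bottom_perm_diag:
  assumes p: "involution_on N \<pi>" and t: "involution_on N \<tau>"
    and comm: "\<And>k. 1 \<le> k \<Longrightarrow> k \<le> N \<Longrightarrow> \<pi> (\<tau> k) = \<rho> k \<and> \<tau> (\<pi> k) = \<rho> k"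
  shows "relabel_bottom N \<pi> (perm_diag N \<tau>) = perm_diag N \<rho>"
proof
  fix x show "relabel_bottom N \<pi> (perm_diag N \<tau>) x = perm_diag N \<rho> x"
  proof (cases "x \<in> dots N")
    case False thus ?thesis by (cases x) (simp add: relabel_bottom_def perm_diag_def)
  next
    case x: True
    then obtain k e where xk: "x = (k, e)" and k: "1 \<le> k" "k \<le> N" "e = 0 \<or> e = 1"
      by (cases x) (auto simp: dots_def)
    have "1 \<le> \<pi> k" "\<pi> k \<le> N" "1 \<le> \<tau> k" "\<tau> k \<le> N" using p t k by (auto simp: involution_on_def)
    thus ?thesis using xk k comm[OF k(1,2)]
      by (auto simp: relabel_bottom_def perm_diag_def perm_bottom_def dots_def)
  qed
qed

definition adj_swap :: "nat \<Rightarrow> nat \<Rightarrow> nat" where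
  "adj_swap j k = (if k = j then Suc j else if k = Suc j then j else k)"

lemma R_diag_eq_perm_diag: "R_diag N j = perm_diag N (adj_swap j)"
  by (rule ext) (auto simp: R_diag_def perm_diag_def adj_swap_def)

lemma involution_on_adj_swap: "1 \<le> j \<Longrightarrow> j < N \<Longrightarrow> involution_on N (adj_swap j)"
  by (auto simp: involution_on_def adj_swap_def)

lemma adj_swap_commute: "Suc a < b \<Longrightarrow> adj_swap a (adj_swap b k) = adj_swap b (adj_swap a k)"
  by (auto simp: adj_swap_def)

lemma adj_swap_reflect:
  assumes "1 \<le> k" "k \<le> N" "j < N"
  shows "adj_swap j (Suc N - k) = Suc N - adj_swap (N - j) k"
  using assms by (auto simp: adj_swap_def)

lemma involution_on_comp:
  assumes "involution_on N \<pi>" "involution_on N \<tau>" "\<And>k. \<pi> (\<tau> k) = \<tau> (\<pi> k)"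
  shows "involution_on N (\<lambda>k. \<pi> (\<tau> k))"
  unfolding involution_on_def
proof (intro allI impI conjI)
  fix k assume k: "1 \<le> k \<and> k \<le> N"
  have t: "1 \<le> \<tau> k" "\<tau> k \<le> N" "\<tau> (\<tau> k) = k" using assms(2) k unfolding involution_on_def by auto
  show "1 \<le> \<pi> (\<tau> k)" "\<pi> (\<tau> k) \<le> N" using assms(1) t unfolding involution_on_def by auto
  have "\<pi> (\<pi> (\<tau> k)) = \<tau> k" using assms(1) t unfolding involution_on_def by auto
  thus "\<pi> (\<tau> (\<pi> (\<tau> k))) = k" using assms(3)[of "\<pi> (\<tau> k)"] t by simp
qed

lemma brauer_diagram_R_diag: "1 \<le> j \<Longrightarrow> j < N \<Longrightarrow> brauer_diagram N (R_diag N j)"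
  unfolding R_diag_eq_perm_diag by (rule brauer_diagram_perm_diag[OF involution_on_adj_swap])

lemma flip_R_diag: "1 \<le> j \<Longrightarrow> j < N \<Longrightarrow> flip_diag N (R_diag N j) = R_diag N j"
  unfolding R_diag_eq_perm_diag by (rule flip_perm_diag[OF involution_on_adj_swap])

lemma compose_R_diag_far:
  assumes "1 \<le> a" "Suc a < b" "b < N"
  shows "compose N (R_diag N a) (R_diag N b) = perm_diag N (\<lambda>k. adj_swap b (adj_swap a k))"
    and "compose N (R_diag N b) (R_diag N a) = perm_diag N (\<lambda>k. adj_swap b (adj_swap a k))"
proof -
  have ia: "involution_on N (adj_swap a)" and ib: "involution_on N (adj_swap b)"
    using assms involution_on_adj_swap by auto
  have comm: "\<And>k. adj_swap a (adj_swap b k) = adj_swap b (adj_swap a k)"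
    using adj_swap_commute[of a b] assms by blast
  show "compose N (R_diag N a) (R_diag N b) = perm_diag N (\<lambda>k. adj_swap b (adj_swap a k))"
    unfolding R_diag_eq_perm_diag compose_perm_diag_right[OF ib brauer_diagram_perm_diag[OF ia]]
    by (rule relabel_bottom_perm_diag[OF ib ia]) (simp add: comm)
  show "compose N (R_diag N b) (R_diag N a) = perm_diag N (\<lambda>k. adj_swap b (adj_swap a k))"
    unfolding R_diag_eq_perm_diag compose_perm_diag_right[OF ia brauer_diagram_perm_diag[OF ib]]
    by (rule relabel_bottom_perm_diag[OF ia ib]) (simp add: comm)
qed


section \<open>Cap diagrams\<close>

definition cap_diag :: "nat \<Rightarrow> nat \<Rightarrow> nat \<Rightarrow> diagram" where
  "cap_diag N a b = (\<lambda>(k, e). if (k, e) \<notin> dots N then (k, e) else if k = a then (b, e)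
       else if k = b then (a, e) else (k, 1 - e))"

lemma E_diag_eq_cap_diag: "E_diag N j = cap_diag N j (Suc j)"
  by (rule ext) (auto simp: E_diag_def cap_diag_def)

lemma brauer_diagram_cap_diag:
  "1 \<le> a \<Longrightarrow> a \<le> N \<Longrightarrow> 1 \<le> b \<Longrightarrow> b \<le> N \<Longrightarrow> a \<noteq> b \<Longrightarrow> brauer_diagram N (cap_diag N a b)"
  unfolding brauer_diagram_def cap_diag_def by (auto simp: dots_def)

lemma brauer_diagram_E_diag: "1 \<le> j \<Longrightarrow> j < N \<Longrightarrow> brauer_diagram N (E_diag N j)"
  unfolding E_diag_eq_cap_diag by (rule brauer_diagram_cap_diag) auto

lemma flip_cap_diag: "flip_diag N (cap_diag N a b) = cap_diag N a b"
  by (rule flip_diag_eqI) (auto simp: cap_diag_def flip_dot_def dots_def)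

lemma flip_E_diag: "flip_diag N (E_diag N j) = E_diag N j"
  unfolding E_diag_eq_cap_diag by (rule flip_cap_diag)

lemma comp_path_lower_exit:
  assumes B: "brauer_diagram N B" and x: "x \<in> dots N"
    and vertical: "snd (B x) = 1 \<Longrightarrow> A (flip_dot (B x)) = B x"
  shows "(bot_map x, out_map (B x)) \<in> (comp_edges N A B)\<^sup>*"
proof -
  obtain q f where wq: "B x = (q, f)" and f: "f = 0 \<or> f = 1" and q: "(q, 0) \<in> dots N"
    using brauer_diagram_closed[OF B x] by (cases "B x") (auto simp: dots_def)
  have "(bot_map (B x), out_map (B x)) \<in> (comp_edges N A B)\<^sup>*"
    using upper_edge[OF q, of A B] vertical wq f by (auto simp: flip_dot_def)
  thus ?thesis using lower_edge[OF x, of B A] by (rule converse_rtrancl_into_rtrancl[rotated])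
qed

lemma comp_path_under_cap:
  assumes B: "brauer_diagram N B" and ac: "(a, 0) \<in> dots N" "(c, 1) \<in> dots N"
    and "B (a, 0) = (a, 1)" "A (a, 0) = (c, 0)"
    and vertical: "snd (B (c, 1)) = 1 \<Longrightarrow> A (flip_dot (B (c, 1))) = B (c, 1)"
  shows "((2, a), out_map (B (c, 1))) \<in> (comp_edges N A B)\<^sup>*"
proof -
  have "((2, a), (1, a)) \<in> comp_edges N A B" using lower_edge[OF ac(1), of B A] assms by simp
  also have "((1, a), (1, c)) \<in> comp_edges N A B" using upper_edge[OF ac(1), of A B] assms by simp
  also have "((1, c), out_map (B (c, 1))) \<in> (comp_edges N A B)\<^sup>*"
    using comp_path_lower_exit[where A = A, OF B ac(2) vertical] by simp
  finally show ?thesis by simp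
qed

text \<open>Where the upper diagram \<open>A\<close> is vertical, a strand of the lower diagram \<open>B\<close> passes
straight through the concatenation.\<close>

lemma comp_path_vertical_through:
  assumes B: "brauer_diagram N B" and x: "x \<in> dots N"
    and vertical_x: "snd x = 1 \<Longrightarrow> A x = flip_dot x"
    and vertical_Bx: "snd (B x) = 1 \<Longrightarrow> A (flip_dot (B x)) = B x"
  shows "(out_map x, out_map (B x)) \<in> (comp_edges N A B)\<^sup>*"
proof -
  obtain k e where xk: "x = (k, e)" and e: "e = 0 \<or> e = 1" using x by (cases x) (auto simp: dots_def)
  have "(out_map x, bot_map x) \<in> (comp_edges N A B)\<^sup>*"
    using upper_edge[OF x, of A B] vertical_x xk e by (auto simp: flip_dot_def)
  thus ?thesis using comp_path_lower_exit[where A = A, OF B x vertical_Bx] by (rule rtrancl_trans)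
qed

text \<open>Concatenating a cap on top of a diagram that is vertical at \<open>a\<close>.\<close>

definition cap_above :: "nat \<Rightarrow> nat \<Rightarrow> nat \<Rightarrow> diagram \<Rightarrow> diagram" where
  "cap_above N a b d = (\<lambda>x. if x \<notin> dots N then x else if x = (a, 1) then (b, 1) else if x = (b, 1) then (a, 1)
      else if x = (a, 0) then d (b, 1) else if x = d (b, 1) then (a, 0) else d x)"

lemma compose_cap_diag:
  assumes b: "brauer_diagram N d" and ab: "1 \<le> a" "a \<le> N" "1 \<le> b" "b \<le> N" "a \<noteq> b"
    and vertical: "d (a, 1) = (a, 0)"
  shows "compose N (cap_diag N a b) d = cap_above N a b d"
proof -
  let ?C = "cap_diag N a b" and ?E = "comp_edges N (cap_diag N a b) d"
  have C: "brauer_diagram N ?C" by (rule brauer_diagram_cap_diag[OF ab])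
  have ad: "(a, 0) \<in> dots N" "(a, 1) \<in> dots N" "(b, 1) \<in> dots N" "(b, 0) \<in> dots N"
    using ab by (auto simp: dots_def)
  define z where "z = d (b, 1)"
  have da0: "d (a, 0) = (a, 1)" using brauer_diagram_involution[OF b ad(2)] vertical by simp
  have z: "z \<in> dots N" "z \<noteq> (a, 0)" "z \<noteq> (a, 1)" "z \<noteq> (b, 1)" "d z = (b, 1)"
    using brauer_diagram_closed[OF b ad(3)] brauer_diagram_no_fixpoint[OF b ad(3)]
      brauer_diagram_involution[OF b ad(3)] da0 vertical ab unfolding z_def by (metis Pair_inject)+
  have "(out_map (a, 0), out_map (d (b, 1))) \<in> ?E\<^sup>*"
    using z ab da0 unfolding dot_maps_simps
    by (intro comp_path_under_cap[OF b ad(1,3)]) (auto simp: z_def cap_diag_def flip_dot_def dots_def)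
  hence through_cap: "(out_map (a, 0), out_map z) \<in> ?E\<^sup>*" by (simp add: z_def)
  show ?thesis
  proof
    interpret diagram_pair N ?C d using C b by unfold_locales
    fix x show "compose N ?C d x = cap_above N a b d x"
    proof (cases "x \<in> dots N")
      case False thus ?thesis by (simp add: compose_def cap_above_def)
    next
      case x: True
      consider "x = (a, 1)" | "x = (b, 1)" | "x = (a, 0)" | "x = z"
        | "x \<notin> {(a, 1), (b, 1), (a, 0), z}" by blast
      thus ?thesis
      proof cases
        case 1 thus ?thesis using upper_edge[OF ad(2), of ?C d] ab ad
          by (intro compose_eqI_path) (auto simp: cap_above_def cap_diag_def dots_def)
      next
        case 2 thus ?thesis using upper_edge[OF ad(3), of ?C d] ab ad
          by (intro compose_eqI_path) (auto simp: cap_above_def cap_diag_def dots_def)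
      next
        case 3 thus ?thesis using through_cap ad ab z
          by (intro compose_eqI_path) (auto simp: cap_above_def z_def)
      next
        case 4 thus ?thesis using path_sym[OF through_cap] z ad
          by (intro compose_eqI_path) (auto simp: cap_above_def z_def)
      next
        case 5
        obtain k e where xk: "x = (k, e)" by (cases x)
        obtain q f where dx: "d x = (q, f)" by (cases "d x")
        have "d (d x) = x" by (rule brauer_diagram_involution[OF b x])
        hence "d x \<noteq> (a, 1)" "d x \<noteq> (b, 1)" "d x \<noteq> (a, 0)"
          using 5 vertical da0 by (auto simp: z_def)
        hence "(out_map x, out_map (d x)) \<in> E\<^sup>*"
          using 5 x brauer_diagram_closed[OF b x] unfolding xk dx
          by (intro comp_path_vertical_through[OF b x[unfolded xk]])
            (auto simp: cap_diag_def flip_dot_def dots_def)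
        thus ?thesis using 5 x brauer_diagram_closed[OF b x] brauer_diagram_no_fixpoint[OF b x]
          by (intro compose_eqI_path) (simp_all add: cap_above_def z_def)
      qed
    qed
  qed
qed

lemma relabel_cap_diag:
  assumes p: "involution_on N \<pi>" and ab: "1 \<le> a" "a \<le> N" "1 \<le> b" "b \<le> N" "a \<noteq> b"
  shows "relabel_top N \<pi> (relabel_bottom N \<pi> (cap_diag N a b)) = cap_diag N (\<pi> a) (\<pi> b)"
proof
  fix x show "relabel_top N \<pi> (relabel_bottom N \<pi> (cap_diag N a b)) x = cap_diag N (\<pi> a) (\<pi> b) x"
  proof (cases "x \<in> dots N")
    case False thus ?thesis by (cases x) (simp add: relabel_top_def cap_diag_def)
  next
    case x: True
    then obtain k e where xk: "x = (k, e)" and k: "1 \<le> k" "k \<le> N" "e = 0 \<or> e = 1"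
      by (cases x) (auto simp: dots_def)
    have pk: "1 \<le> \<pi> k" "\<pi> k \<le> N" "\<pi> (\<pi> k) = k" using p k by (auto simp: involution_on_def)
    have pa: "\<pi> (\<pi> a) = a" "\<pi> (\<pi> b) = b" "1 \<le> \<pi> a" "\<pi> a \<le> N" "1 \<le> \<pi> b" "\<pi> b \<le> N"
      using p ab by (auto simp: involution_on_def)
    have i: "\<pi> k = a \<longleftrightarrow> k = \<pi> a" "\<pi> k = b \<longleftrightarrow> k = \<pi> b" using pk pa by metis+
    have "relabel_top N \<pi> (relabel_bottom N \<pi> (cap_diag N a b)) x
        = perm_top \<pi> (perm_bottom \<pi> (cap_diag N a b (perm_bottom \<pi> (perm_top \<pi> x))))"
      using x perm_top_in_dots[OF p x] by (simp add: relabel_top_def relabel_bottom_def)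
    also have "perm_bottom \<pi> (perm_top \<pi> x) = (\<pi> k, e)" using xk k by (auto simp: perm_bottom_def perm_top_def)
    finally show ?thesis using xk k pk pa i ab
      by (auto simp: cap_diag_def dots_def perm_bottom_def perm_top_def)
  qed
qed

definition double_cap_diag :: "nat \<Rightarrow> nat \<Rightarrow> nat \<Rightarrow> diagram" where
  "double_cap_diag N a b = (\<lambda>(k, e). if (k, e) \<notin> dots N then (k, e) else if k = a then (Suc a, e)
       else if k = Suc a then (a, e) else if k = b then (Suc b, e) else if k = Suc b then (b, e) else (k, 1 - e))"

lemma compose_E_diag_far:
  assumes "1 \<le> a" "Suc a < b" "b < N"
  shows "compose N (E_diag N a) (E_diag N b) = double_cap_diag N a b"
    and "compose N (E_diag N b) (E_diag N a) = double_cap_diag N a b"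
proof -
  have "compose N (E_diag N a) (E_diag N b) = cap_above N a (Suc a) (cap_diag N b (Suc b))"
    unfolding E_diag_eq_cap_diag using assms
    by (intro compose_cap_diag brauer_diagram_cap_diag) (auto simp: cap_diag_def dots_def)
  also have "\<dots> = double_cap_diag N a b"
    using assms by (intro diag_eqI) (auto simp: cap_above_def cap_diag_def double_cap_diag_def not_in_dots_iff)
  finally show "compose N (E_diag N a) (E_diag N b) = double_cap_diag N a b" .
  have "compose N (E_diag N b) (E_diag N a) = cap_above N b (Suc b) (cap_diag N a (Suc a))"
    unfolding E_diag_eq_cap_diag using assms
    by (intro compose_cap_diag brauer_diagram_cap_diag) (auto simp: cap_diag_def dots_def)
  also have "\<dots> = double_cap_diag N a b"
    using assms by (intro diag_eqI) (auto simp: cap_above_def cap_diag_def double_cap_diag_def not_in_dots_iff)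
  finally show "compose N (E_diag N b) (E_diag N a) = double_cap_diag N a b" .
qed

section \<open>The diagrams whose basis elements lie in the image\<close>

text \<open>The images of the generators of \<open>Br(C\<^sub>n)\<close> are scalar multiples of basis elements, with
invertible scalars (powers of \<open>\<delta>\<close>), so their products are again, up to units, the basis
elements of the concatenated diagrams.\<close>

inductive_set phi_diagrams :: "nat \<Rightarrow> diagram set" for n where
  phi_id: "id_diag (2 * n) \<in> phi_diagrams n"
| phi_R: "R_diag (2 * n) n \<in> phi_diagrams n"
| phi_E: "E_diag (2 * n) n \<in> phi_diagrams n"
| phi_RR: "0 < i \<Longrightarrow> i < n \<Longrightarrow> compose (2 * n) (R_diag (2 * n) (n - i)) (R_diag (2 * n) (n + i)) \<in> phi_diagrams n"
| phi_EE: "0 < i \<Longrightarrow> i < n \<Longrightarrow> compose (2 * n) (E_diag (2 * n) (n - i)) (E_diag (2 * n) (n + i)) \<in> phi_diagrams n"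
| phi_compose: "a \<in> phi_diagrams n \<Longrightarrow> b \<in> phi_diagrams n \<Longrightarrow> compose (2 * n) a b \<in> phi_diagrams n"

lemma phi_diagrams_brauer:
  assumes n: "1 \<le> n" shows "d \<in> phi_diagrams n \<Longrightarrow> brauer_diagram (2 * n) d"
proof (induction rule: phi_diagrams.induct)
  case phi_id thus ?case by (rule brauer_diagram_id)
next
  case phi_R thus ?case using n by (intro brauer_diagram_R_diag) auto
next
  case phi_E thus ?case using n by (intro brauer_diagram_E_diag) auto
next
  case (phi_RR i) thus ?case by (intro brauer_diagram_compose brauer_diagram_R_diag) auto
next
  case (phi_EE i) thus ?case by (intro brauer_diagram_compose brauer_diagram_E_diag) auto
next
  case (phi_compose a b) thus ?case by (intro brauer_diagram_compose)
qed

lemma basis_elem_compose_in_gen_subalg: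
  assumes a: "brauer_diagram N a" and b: "brauer_diagram N b"
    and ab: "br_mult N (basis_elem a) (basis_elem b) \<in> gen_subalg N G"
  shows "basis_elem (compose N a b) \<in> gen_subalg N G"
proof -
  have "(\<lambda>d. fls_X_inv ^ loops N a b * br_mult N (basis_elem a) (basis_elem b) d) \<in> gen_subalg N G"
    by (rule gen_subalg.smult[OF laurent_poly_power[OF laurent_poly_X_inv] ab])
  moreover have "(\<lambda>d. fls_X_inv ^ loops N a b * br_mult N (basis_elem a) (basis_elem b) d)
      = basis_elem (compose N a b)"
    unfolding br_mult_basis_elem[OF a b]
    by (rule ext) (simp add: basis_elem_def fls_X_inv_power_mult_X_power)
  ultimately show ?thesis by simp
qed

lemma basis_elem_in_phi_image:
  assumes n: "1 \<le> n" shows "d \<in> phi_diagrams n \<Longrightarrow> basis_elem d \<in> phi_image n"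
  unfolding phi_image_def
proof (induction rule: phi_diagrams.induct)
  case phi_id thus ?case by (rule gen_subalg.one)
next
  case phi_R thus ?case by (intro gen_subalg.gen) (simp add: phi_gens_def)
next
  case phi_E thus ?case by (intro gen_subalg.gen) (simp add: phi_gens_def)
next
  case (phi_RR i) thus ?case
    by (intro basis_elem_compose_in_gen_subalg brauer_diagram_R_diag gen_subalg.gen) (auto simp: phi_gens_def)
next
  case (phi_EE i) thus ?case
    by (intro basis_elem_compose_in_gen_subalg brauer_diagram_E_diag gen_subalg.gen) (auto simp: phi_gens_def)
next
  case (phi_compose a b) thus ?case
    by (intro basis_elem_compose_in_gen_subalg gen_subalg.mult phi_diagrams_brauer[OF n])
qed

lemma phi_diagrams_flip_closed:
  assumes n: "1 \<le> n" shows "d \<in> phi_diagrams n \<Longrightarrow> flip_diag (2 * n) d \<in> phi_diagrams n"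
proof (induction rule: phi_diagrams.induct)
  case phi_id thus ?case by (simp add: flip_id_diag phi_diagrams.phi_id)
next
  case phi_R thus ?case using flip_R_diag[of n "2 * n"] phi_diagrams.phi_R n by simp
next
  case phi_E thus ?case using flip_E_diag phi_diagrams.phi_E by simp
next
  case (phi_RR i)
  have ab: "1 \<le> n - i" "Suc (n - i) < n + i" "n + i < 2 * n" using phi_RR by auto
  thus ?case
    using compose_flip_diag[OF brauer_diagram_R_diag brauer_diagram_R_diag, of "n - i" "2 * n" "n + i"]
      flip_R_diag compose_R_diag_far[OF ab] phi_diagrams.phi_RR[OF phi_RR] by simp
next
  case (phi_EE i)
  have ab: "1 \<le> n - i" "Suc (n - i) < n + i" "n + i < 2 * n" using phi_EE by auto
  thus ?case
    using compose_flip_diag[OF brauer_diagram_E_diag brauer_diagram_E_diag, of "n - i" "2 * n" "n + i"]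
      flip_E_diag compose_E_diag_far[OF ab] phi_diagrams.phi_EE[OF phi_EE] by simp
next
  case (phi_compose a b)
  have "flip_diag (2 * n) (compose (2 * n) a b) = compose (2 * n) (flip_diag (2 * n) b) (flip_diag (2 * n) a)"
    using compose_flip_diag[OF phi_diagrams_brauer[OF n phi_compose.hyps(1)] phi_diagrams_brauer[OF n phi_compose.hyps(2)]]
    by simp
  thus ?case using phi_compose.IH phi_diagrams.phi_compose by simp
qed

definition commutes_reflect :: "nat \<Rightarrow> (nat \<Rightarrow> nat) \<Rightarrow> bool" where
  "commutes_reflect N \<pi> \<longleftrightarrow> (\<forall>k. 1 \<le> k \<and> k \<le> N \<longrightarrow> \<pi> (N + 1 - k) = N + 1 - \<pi> k)"

lemma symmetric_id_diag: "symmetric_diag N (id_diag N)"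
  unfolding symmetric_diag_def by (auto simp: id_diag_def dots_def reflect_def)

lemma symmetric_perm_diag:
  assumes p: "involution_on N \<pi>" and r: "commutes_reflect N \<pi>" shows "symmetric_diag N (perm_diag N \<pi>)"
  unfolding symmetric_diag_def
proof
  fix x assume x: "x \<in> dots N"
  then obtain k e where xk: "x = (k, e)" and k: "1 \<le> k" "k \<le> N" "e = 0 \<or> e = 1"
    by (cases x) (auto simp: dots_def)
  have "1 \<le> \<pi> k" "\<pi> k \<le> N" using p k by (auto simp: involution_on_def)
  thus "perm_diag N \<pi> (reflect N x) = reflect N (perm_diag N \<pi> x)"
    using k xk r by (auto simp: perm_diag_def dots_def commutes_reflect_def reflect_def)
qed

lemma symmetric_cap_diag:
  assumes "1 \<le> a" "a \<le> N" "b = N + 1 - a" shows "symmetric_diag N (cap_diag N a b)"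
  unfolding symmetric_diag_def
proof
  fix x assume x: "x \<in> dots N"
  then obtain k e where xk: "x = (k, e)" and k: "1 \<le> k" "k \<le> N" "e = 0 \<or> e = 1"
    by (cases x) (auto simp: dots_def)
  show "cap_diag N a b (reflect N x) = reflect N (cap_diag N a b x)"
    using k xk assms by (auto simp: cap_diag_def dots_def reflect_def)
qed

lemma symmetric_double_cap_diag:
  assumes "1 \<le> a" "Suc a < b" "b < N" "Suc b = N + 1 - a" shows "symmetric_diag N (double_cap_diag N a b)"
  unfolding symmetric_diag_def
proof
  fix x assume x: "x \<in> dots N"
  then obtain k e where xk: "x = (k, e)" and k: "1 \<le> k" "k \<le> N" "e = 0 \<or> e = 1"
    by (cases x) (auto simp: dots_def)
  have r: "N + 1 - a = Suc b" "N + 1 - Suc a = b" "N + 1 - b = Suc a" "N + 1 - Suc b = a" using assms by auto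
  have nq: "a \<noteq> Suc a" "a \<noteq> b" "a \<noteq> Suc b" "Suc a \<noteq> b" "Suc a \<noteq> Suc b" "b \<noteq> Suc b" using assms by auto
  have dd: "(k, e) \<in> dots N" "(N + 1 - k, e) \<in> dots N" using k by (auto simp: dots_def)
  consider "k = a" | "k = Suc a" | "k = b" | "k = Suc b" | "k \<noteq> a \<and> k \<noteq> Suc a \<and> k \<noteq> b \<and> k \<noteq> Suc b" by blast
  thus "double_cap_diag N a b (reflect N x) = reflect N (double_cap_diag N a b x)"
  proof cases
    case 5
    hence "N + 1 - k \<noteq> a \<and> N + 1 - k \<noteq> Suc a \<and> N + 1 - k \<noteq> b \<and> N + 1 - k \<noteq> Suc b" using k assms by auto
    thus ?thesis using 5 xk dd by (simp add: double_cap_diag_def reflect_def)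
  qed (use xk dd r nq in \<open>simp_all add: double_cap_diag_def reflect_def\<close>)
qed

text \<open>\<open>mirror_swap n i\<close> is the permutation of \<open>\<phi>(r\<^sub>n\<^sub>-\<^sub>i)\<close>: it swaps \<open>i\<close>, \<open>i + 1\<close> and their
mirror images \<open>2n - i\<close>, \<open>2n + 1 - i\<close>.\<close>

definition mirror_swap :: "nat \<Rightarrow> nat \<Rightarrow> nat \<Rightarrow> nat" where
  "mirror_swap n i = (\<lambda>k. adj_swap (2 * n - i) (adj_swap i k))"

lemma adj_swap_adj_swap:
  "Suc a < b \<Longrightarrow> adj_swap b (adj_swap a k) =
    (if k = a then Suc a else if k = Suc a then a else if k = b then Suc b else if k = Suc b then b else k)"
  by (simp add: adj_swap_def)

lemma mirror_swap_eq:
  assumes "1 \<le> i" "i < n"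
  shows "mirror_swap n i k = (if k = i then Suc i else if k = Suc i then i
    else if k = 2 * n - i then 2 * n + 1 - i else if k = 2 * n + 1 - i then 2 * n - i else k)"
proof -
  have "Suc i < 2 * n - i" "Suc (2 * n - i) = 2 * n + 1 - i" using assms by auto
  thus ?thesis unfolding mirror_swap_def by (simp only: adj_swap_adj_swap)
qed

lemma involution_on_mirror_swap:
  assumes "1 \<le> i" "i < n" shows "involution_on (2 * n) (mirror_swap n i)"
proof -
  have "Suc i < 2 * n - i" using assms by auto
  thus ?thesis unfolding mirror_swap_def using assms
    by (intro involution_on_comp[of _ "adj_swap (2 * n - i)" "adj_swap i"] involution_on_adj_swap)
      (auto simp: adj_swap_commute[symmetric])
qed

lemma mirror_swap_reflect:
  assumes "1 \<le> i" "i < n" "1 \<le> k" "k \<le> 2 * n"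
  shows "mirror_swap n i (2 * n + 1 - k) = 2 * n + 1 - mirror_swap n i k"
proof -
  have "1 \<le> adj_swap (2 * n - i) k" "adj_swap (2 * n - i) k \<le> 2 * n"
    using assms by (auto simp: adj_swap_def)
  moreover have "2 * n - (2 * n - i) = i" "Suc i < 2 * n - i" using assms by auto
  ultimately show ?thesis unfolding mirror_swap_def using assms
    by (simp add: adj_swap_reflect adj_swap_commute[of i "2 * n - i"])
qed

lemma compose_R_diag_mirror:
  assumes "1 \<le> i" "i < n"
  shows "compose (2 * n) (R_diag (2 * n) i) (R_diag (2 * n) (2 * n - i)) = perm_diag (2 * n) (mirror_swap n i)"
  unfolding mirror_swap_def using assms by (intro compose_R_diag_far) auto

lemma mirror_swap_in_phi_diagrams:
  assumes "1 \<le> i" "i < n" shows "perm_diag (2 * n) (mirror_swap n i) \<in> phi_diagrams n"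
proof -
  have "n - (n - i) = i" "n + (n - i) = 2 * n - i" using assms by auto
  thus ?thesis using phi_diagrams.phi_RR[of "n - i" n] compose_R_diag_mirror[OF assms] assms by auto
qed

lemma phi_diagrams_symmetric:
  assumes n: "1 \<le> n" shows "d \<in> phi_diagrams n \<Longrightarrow> symmetric_diag (2 * n) d"
proof (induction rule: phi_diagrams.induct)
  case phi_id thus ?case by (rule symmetric_id_diag)
next
  case phi_R
  have "commutes_reflect (2 * n) (adj_swap n)" unfolding commutes_reflect_def using adj_swap_reflect[of _ "2 * n" n] n by auto
  thus ?case unfolding R_diag_eq_perm_diag using n by (intro symmetric_perm_diag involution_on_adj_swap) auto
next
  case phi_E thus ?case unfolding E_diag_eq_cap_diag using n by (intro symmetric_cap_diag) auto
next
  case (phi_RR i)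
  have "n + i = 2 * n - (n - i)" using phi_RR by auto
  hence "compose (2 * n) (R_diag (2 * n) (n - i)) (R_diag (2 * n) (n + i)) = perm_diag (2 * n) (mirror_swap n (n - i))"
    using compose_R_diag_mirror[of "n - i" n] phi_RR by simp
  moreover have "commutes_reflect (2 * n) (mirror_swap n (n - i))"
    unfolding commutes_reflect_def using mirror_swap_reflect[of "n - i" n] phi_RR by auto
  ultimately show ?case using phi_RR by (simp add: symmetric_perm_diag involution_on_mirror_swap)
next
  case (phi_EE i)
  have "compose (2 * n) (E_diag (2 * n) (n - i)) (E_diag (2 * n) (n + i)) = double_cap_diag (2 * n) (n - i) (n + i)"
    using phi_EE by (intro compose_E_diag_far) auto
  thus ?case using phi_EE by (simp add: symmetric_double_cap_diag)
next
  case (phi_compose a b) thus ?case using symmetric_diag_compose phi_diagrams_brauer[OF n] by blast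
qed


text \<open>\<open>sym_shift n p\<close> is a permutation in the image that moves \<open>p\<close> to \<open>p - 1\<close> and
\<open>2n + 1 - p\<close> to \<open>2n + 2 - p\<close> and fixes every other point outside these four.\<close>

definition sym_shift :: "nat \<Rightarrow> nat \<Rightarrow> nat \<Rightarrow> nat" where
  "sym_shift n p =
    (if p \<le> n then mirror_swap n (p - 1) else if p = Suc n then adj_swap n else mirror_swap n (2 * n + 1 - p))"

lemma sym_shift_in_phi_diagrams:
  "2 \<le> p \<Longrightarrow> p \<le> 2 * n \<Longrightarrow> perm_diag (2 * n) (sym_shift n p) \<in> phi_diagrams n"
  unfolding sym_shift_def using mirror_swap_in_phi_diagrams phi_diagrams.phi_R R_diag_eq_perm_diag by auto

lemma involution_on_sym_shift:
  "1 \<le> n \<Longrightarrow> 2 \<le> p \<Longrightarrow> p \<le> 2 * n \<Longrightarrow> involution_on (2 * n) (sym_shift n p)"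
  unfolding sym_shift_def using involution_on_mirror_swap involution_on_adj_swap by auto

lemma sym_shift_moves: "2 \<le> p \<Longrightarrow> p \<le> 2 * n \<Longrightarrow> sym_shift n p p = p - 1"
  unfolding sym_shift_def by (auto simp: mirror_swap_eq adj_swap_def)

lemma sym_shift_fixes:
  assumes "2 \<le> p" "p \<le> 2 * n" "k \<noteq> p - 1" "k \<noteq> p" "k \<noteq> 2 * n + 1 - p" "k \<noteq> 2 * n + 2 - p"
  shows "sym_shift n p k = k"
proof -
  consider "p \<le> n" | "p = Suc n" | "Suc n < p" by linarith
  thus ?thesis
  proof cases
    case 1
    hence "Suc (p - 1) = p" "2 * n - (p - 1) = 2 * n + 1 - p" "2 * n + 1 - (p - 1) = 2 * n + 2 - p"
      using assms by auto
    thus ?thesis using 1 assms by (simp add: sym_shift_def mirror_swap_eq)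
  next
    case 2 thus ?thesis using assms by (simp add: sym_shift_def adj_swap_def)
  next
    case 3
    hence "Suc (2 * n + 1 - p) = 2 * n + 2 - p" "2 * n - (2 * n + 1 - p) = p - 1" "2 * n + 1 - (2 * n + 1 - p) = p"
      using assms by auto
    thus ?thesis using 3 assms by (simp add: sym_shift_def mirror_swap_eq)
  qed
qed

lemma commutes_reflect_sym_shift: "2 \<le> p \<Longrightarrow> p \<le> 2 * n \<Longrightarrow> commutes_reflect (2 * n) (sym_shift n p)"
  unfolding commutes_reflect_def sym_shift_def using mirror_swap_reflect adj_swap_reflect[of _ "2 * n" n] by auto

lemma symmetric_conjugate:
  assumes s: "symmetric_diag N d" and b: "brauer_diagram N d"
    and \<sigma>: "\<And>y. y \<in> dots N \<Longrightarrow> \<sigma> y \<in> dots N" "\<And>y. y \<in> dots N \<Longrightarrow> \<sigma> (reflect N y) = reflect N (\<sigma> y)"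
  shows "symmetric_diag N (\<lambda>x. if x \<in> dots N then \<sigma> (d (\<sigma> x)) else x)"
  unfolding symmetric_diag_def
proof
  fix x assume x: "x \<in> dots N"
  have "\<sigma> (d (\<sigma> (reflect N x))) = \<sigma> (reflect N (d (\<sigma> x)))"
    using s \<sigma> x by (simp add: symmetric_diag_def)
  also have "\<dots> = reflect N (\<sigma> (d (\<sigma> x)))" using \<sigma> brauer_diagram_closed[OF b] x by simp
  finally show "(if reflect N x \<in> dots N then \<sigma> (d (\<sigma> (reflect N x))) else reflect N x)
      = reflect N (if x \<in> dots N then \<sigma> (d (\<sigma> x)) else x)"
    using x reflect_in_dots by simp
qed

lemma symmetric_relabel:
  assumes p: "involution_on N \<pi>" and r: "commutes_reflect N \<pi>"
    and s: "symmetric_diag N d" and b: "brauer_diagram N d"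
  shows "symmetric_diag N (relabel_bottom N \<pi> d)" and "symmetric_diag N (relabel_top N \<pi> d)"
proof -
  have "\<And>k. 1 \<le> k \<Longrightarrow> k \<le> N \<Longrightarrow> 1 \<le> \<pi> k \<and> \<pi> k \<le> N \<and> \<pi> (N + 1 - k) = N + 1 - \<pi> k"
    using p r by (auto simp: involution_on_def commutes_reflect_def)
  hence "\<And>y. y \<in> dots N \<Longrightarrow> perm_bottom \<pi> (reflect N y) = reflect N (perm_bottom \<pi> y)"
    "\<And>y. y \<in> dots N \<Longrightarrow> perm_top \<pi> (reflect N y) = reflect N (perm_top \<pi> y)"
    by (auto simp: perm_bottom_def perm_top_def reflect_def dots_def)
  thus "symmetric_diag N (relabel_bottom N \<pi> d)" "symmetric_diag N (relabel_top N \<pi> d)"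
    unfolding relabel_bottom_def relabel_top_def
    by (auto intro!: symmetric_conjugate[OF s b] perm_bottom_in_dots[OF p] perm_top_in_dots[OF p])
qed


section \<open>Every symmetric diagram lies in the image\<close>

text \<open>The proof is an induction on the number \<open>j - 1\<close> of leftmost strands known to be
vertical; by symmetry the \<open>j - 1\<close> rightmost strands are then vertical too.\<close>

definition sym_vertical_below :: "nat \<Rightarrow> nat \<Rightarrow> diagram \<Rightarrow> bool" where
  "sym_vertical_below n j d \<longleftrightarrow> brauer_diagram (2 * n) d \<and> symmetric_diag (2 * n) d
      \<and> (\<forall>i. 1 \<le> i \<and> i < j \<longrightarrow> d (i, 1) = (i, 0))"

lemma reflect_simp [simp]: "reflect N (k, e) = (N + 1 - k, e)"
  by (simp add: reflect_def)

lemma sym_vertical_below_reflect: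
  "sym_vertical_below n j d \<Longrightarrow> 1 \<le> k \<Longrightarrow> k \<le> 2 * n \<Longrightarrow> e = 0 \<or> e = 1 \<Longrightarrow>
    d (2 * n + 1 - k, e) = reflect (2 * n) (d (k, e))"
  unfolding sym_vertical_below_def symmetric_diag_def by (auto simp: dots_def)

lemma sym_vertical_below_vertical:
  assumes D: "sym_vertical_below n j d" and i: "1 \<le> i" "i < j" and j: "j \<le> n + 1"
  shows "d (i, 1) = (i, 0)" "d (i, 0) = (i, 1)"
    "d (2 * n + 1 - i, 1) = (2 * n + 1 - i, 0)" "d (2 * n + 1 - i, 0) = (2 * n + 1 - i, 1)"
proof -
  have b: "brauer_diagram (2 * n) d" using D by (simp add: sym_vertical_below_def)
  show top: "d (i, 1) = (i, 0)" using D i by (simp add: sym_vertical_below_def)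
  have "(i, 1) \<in> dots (2 * n)" using i j by (auto simp: dots_def)
  thus bottom: "d (i, 0) = (i, 1)" using brauer_diagram_involution[OF b] top by metis
  show "d (2 * n + 1 - i, 1) = (2 * n + 1 - i, 0)" "d (2 * n + 1 - i, 0) = (2 * n + 1 - i, 1)"
    using sym_vertical_below_reflect[OF D, of i 1] sym_vertical_below_reflect[OF D, of i 0] top bottom i j
    by simp_all
qed

lemma sym_vertical_below_inner:
  assumes D: "sym_vertical_below n j d" and j: "1 \<le> j" "j \<le> n + 1"
    and k: "j \<le> k" "k \<le> 2 * n + 1 - j" and e: "e = 0 \<or> e = 1" and dk: "d (k, e) = (p, f)"
  shows "j \<le> p \<and> p \<le> 2 * n + 1 - j \<and> (f = 0 \<or> f = 1)"
proof -
  have b: "brauer_diagram (2 * n) d" using D by (simp add: sym_vertical_below_def)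
  have kd: "(k, e) \<in> dots (2 * n)" using j k e by (auto simp: dots_def)
  have p: "1 \<le> p" "p \<le> 2 * n" "f = 0 \<or> f = 1"
    using brauer_diagram_closed[OF b kd] dk by (auto simp: dots_def)
  have partner: "d (p, f) = (k, e)" using brauer_diagram_involution[OF b kd] dk by simp
  have "\<not> p < j"
  proof
    assume "p < j"
    hence "d (p, f) = (p, 1 - f)" using sym_vertical_below_vertical[OF D p(1) _ j(2)] p(3) by auto
    thus False using partner \<open>p < j\<close> k by simp
  qed
  moreover have "\<not> p > 2 * n + 1 - j"
  proof
    assume a: "p > 2 * n + 1 - j"
    define i where "i = 2 * n + 1 - p"
    have i: "1 \<le> i" "i < j" "p = 2 * n + 1 - i" using a p i_def by auto
    hence "d (p, f) = (p, 1 - f)" using sym_vertical_below_vertical[OF D i(1,2) j(2)] p(3) by auto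
    thus False using partner a k by simp
  qed
  ultimately show ?thesis using p by simp
qed

lemma sym_vertical_below_relabel:
  assumes D: "sym_vertical_below n j d" and n: "1 \<le> n" and j: "1 \<le> j" "j \<le> n"
    and p: "Suc j \<le> p" "p \<le> 2 * n + 1 - j"
  shows "sym_vertical_below n j (relabel_bottom (2 * n) (sym_shift n p) d)"
    and "sym_vertical_below n j (relabel_top (2 * n) (sym_shift n p) d)"
proof -
  have p2: "2 \<le> p" "p \<le> 2 * n" using p j by auto
  have inv: "involution_on (2 * n) (sym_shift n p)" by (rule involution_on_sym_shift[OF n p2])
  have b: "brauer_diagram (2 * n) d" "symmetric_diag (2 * n) d" using D by (auto simp: sym_vertical_below_def)
  have shift_fixes: "sym_shift n p i = i" if "1 \<le> i" "i < j" for i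
    using that p j by (intro sym_shift_fixes) auto
  have vertical: "d (i, 1) = (i, 0)" "(i, 1) \<in> dots (2 * n)" if "1 \<le> i" "i < j" for i
    using that sym_vertical_below_vertical[OF D, of i] j by (auto simp: dots_def)
  show "sym_vertical_below n j (relabel_bottom (2 * n) (sym_shift n p) d)"
    unfolding sym_vertical_below_def
    using brauer_diagram_relabel_bottom[OF inv b(1)] symmetric_relabel(1)[OF inv commutes_reflect_sym_shift[OF p2] b(2,1)]
      vertical shift_fixes by (simp add: relabel_bottom_def perm_bottom_def)
  show "sym_vertical_below n j (relabel_top (2 * n) (sym_shift n p) d)"
    unfolding sym_vertical_below_def
    using brauer_diagram_relabel_top[OF inv b(1)] symmetric_relabel(2)[OF inv commutes_reflect_sym_shift[OF p2] b(2,1)]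
      vertical shift_fixes by (simp add: relabel_top_def perm_top_def)
qed

lemma sym_vertical_below_flip_diag:
  assumes D: "sym_vertical_below n j d" and j: "j \<le> n + 1"
  shows "sym_vertical_below n j (flip_diag (2 * n) d)"
proof -
  have b: "brauer_diagram (2 * n) d" "symmetric_diag (2 * n) d" using D by (auto simp: sym_vertical_below_def)
  have "flip_diag (2 * n) d (i, 1) = (i, 0)" if "1 \<le> i" "i < j" for i
    using that sym_vertical_below_vertical[OF D, of i] j by (simp add: flip_diag_def flip_dot_def dots_def)
  thus ?thesis unfolding sym_vertical_below_def
    using brauer_diagram_flip_diag[OF b(1)] symmetric_diag_flip_diag[OF b(2)] by blast
qed

definition override_diag :: "dot set \<Rightarrow> (dot \<Rightarrow> dot) \<Rightarrow> diagram \<Rightarrow> diagram" where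
  "override_diag S g d = (\<lambda>x. if x \<in> S then g x else d x)"

lemma brauer_diagram_override_diag:
  assumes b: "brauer_diagram N d" and S: "S \<subseteq> dots N" and closed: "\<And>x. x \<in> S \<Longrightarrow> d x \<in> S"
    and g: "\<And>x. x \<in> S \<Longrightarrow> g x \<in> S \<and> g x \<noteq> x \<and> g (g x) = x"
  shows "brauer_diagram N (override_diag S g d)"
  unfolding brauer_diagram_def
proof (intro conjI ballI allI impI)
  fix x assume x: "x \<in> dots N"
  show "override_diag S g d x \<in> dots N" "override_diag S g d x \<noteq> x"
    using x S g[of x] brauer_diagram_closed[OF b x] brauer_diagram_no_fixpoint[OF b x]
    by (auto simp: override_diag_def)
  have "x \<notin> S \<Longrightarrow> d x \<notin> S" using closed brauer_diagram_involution[OF b x] by metis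
  thus "override_diag S g d (override_diag S g d x) = x"
    using g[of x] brauer_diagram_involution[OF b x] by (auto simp: override_diag_def)
next
  fix x assume "x \<notin> dots N"
  thus "override_diag S g d x = x" using S brauer_diagram_outside[OF b] by (auto simp: override_diag_def)
qed

lemma symmetric_override_diag:
  assumes s: "symmetric_diag N d" and S: "S \<subseteq> dots N"
    and rS: "\<And>x. x \<in> S \<Longrightarrow> reflect N x \<in> S" and rg: "\<And>x. x \<in> S \<Longrightarrow> g (reflect N x) = reflect N (g x)"
  shows "symmetric_diag N (override_diag S g d)"
  unfolding symmetric_diag_def
proof
  fix x assume x: "x \<in> dots N"
  have "x \<notin> S \<Longrightarrow> reflect N x \<notin> S" using rS reflect_involution[OF x] by metis
  thus "override_diag S g d (reflect N x) = reflect N (override_diag S g d x)"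
    using rS rg s x by (auto simp: override_diag_def symmetric_diag_def)
qed

lemma sym_vertical_below_override_diag:
  assumes D: "sym_vertical_below n j d" and S: "S \<subseteq> dots (2 * n)" and closed: "\<And>x. x \<in> S \<Longrightarrow> d x \<in> S"
    and g: "\<And>x. x \<in> S \<Longrightarrow> g x \<in> S \<and> g x \<noteq> x \<and> g (g x) = x"
    and rS: "\<And>x. x \<in> S \<Longrightarrow> reflect (2 * n) x \<in> S"
    and rg: "\<And>x. x \<in> S \<Longrightarrow> g (reflect (2 * n) x) = reflect (2 * n) (g x)"
    and gj: "g (j, 1) = (j, 0)" and Sj: "(j, 1) \<in> S" and S_below: "\<And>i. i < j \<Longrightarrow> (i, 1) \<notin> S"
  shows "sym_vertical_below n (Suc j) (override_diag S g d)"
  unfolding sym_vertical_below_def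
proof (intro conjI allI impI)
  have b: "brauer_diagram (2 * n) d" "symmetric_diag (2 * n) d" using D by (auto simp: sym_vertical_below_def)
  show "brauer_diagram (2 * n) (override_diag S g d)" by (rule brauer_diagram_override_diag[OF b(1) S closed g])
  show "symmetric_diag (2 * n) (override_diag S g d)" by (rule symmetric_override_diag[where g = g, OF b(2) S rS rg])
  fix i assume "1 \<le> i \<and> i < Suc j"
  thus "override_diag S g d (i, 1) = (i, 0)"
    using D gj Sj S_below[of i] by (cases "i = j") (auto simp: override_diag_def sym_vertical_below_def)
qed

lemma mirror_cap_in_phi_diagrams:
  assumes n: "1 \<le> n" shows "1 \<le> j \<Longrightarrow> j \<le> n \<Longrightarrow> cap_diag (2 * n) j (2 * n + 1 - j) \<in> phi_diagrams n"
proof (induction "n - j" arbitrary: j)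
  case 0
  hence "j = n" by simp
  thus ?case using phi_diagrams.phi_E[of n] E_diag_eq_cap_diag[of "2 * n" n] by simp
next
  case (Suc t)
  have j: "1 \<le> j" "j < n" using Suc by auto
  let ?C = "cap_diag (2 * n) (Suc j) (2 * n - j)" and ?\<pi> = "mirror_swap n j"
  have C: "?C \<in> phi_diagrams n" using Suc.hyps(1)[of "Suc j"] Suc j by auto
  have bC: "brauer_diagram (2 * n) ?C" using j by (intro brauer_diagram_cap_diag) auto
  have p: "involution_on (2 * n) ?\<pi>" by (rule involution_on_mirror_swap[OF j])
  have "compose (2 * n) (perm_diag (2 * n) ?\<pi>) (compose (2 * n) ?C (perm_diag (2 * n) ?\<pi>)) \<in> phi_diagrams n"
    using C mirror_swap_in_phi_diagrams[OF j] by (intro phi_diagrams.phi_compose)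
  moreover have "compose (2 * n) (perm_diag (2 * n) ?\<pi>) (compose (2 * n) ?C (perm_diag (2 * n) ?\<pi>))
      = cap_diag (2 * n) (?\<pi> (Suc j)) (?\<pi> (2 * n - j))"
    using j by (simp add: compose_perm_diag_right[OF p bC] compose_perm_diag_left[OF p brauer_diagram_relabel_bottom[OF p bC]]
        relabel_cap_diag[OF p])
  moreover have "?\<pi> (Suc j) = j" "?\<pi> (2 * n - j) = 2 * n + 1 - j"
    using j by (auto simp: mirror_swap_eq)
  ultimately show ?case by simp
qed

lemma double_cap_in_phi_diagrams:
  assumes "1 \<le> j" "j < n"
  shows "double_cap_diag (2 * n) j (2 * n - j) \<in> phi_diagrams n"
proof -
  have "n - (n - j) = j" "n + (n - j) = 2 * n - j" using assms by auto
  moreover have "compose (2 * n) (E_diag (2 * n) j) (E_diag (2 * n) (2 * n - j)) = double_cap_diag (2 * n) j (2 * n - j)"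
    using assms by (intro compose_E_diag_far) auto
  ultimately show ?thesis using phi_diagrams.phi_EE[of "n - j" n] assms by auto
qed

lemma double_cap_diag_simps:
  assumes "1 \<le> a" "Suc a < b" "Suc b \<le> N" "e = 0 \<or> e = 1"
  shows "double_cap_diag N a b (a, e) = (Suc a, e)" "double_cap_diag N a b (Suc a, e) = (a, e)"
    "double_cap_diag N a b (b, e) = (Suc b, e)" "double_cap_diag N a b (Suc b, e) = (b, e)"
    "1 \<le> k \<Longrightarrow> k \<le> N \<Longrightarrow> k \<noteq> a \<Longrightarrow> k \<noteq> Suc a \<Longrightarrow> k \<noteq> b \<Longrightarrow> k \<noteq> Suc b \<Longrightarrow>
      double_cap_diag N a b (k, e) = (k, 1 - e)"
  using assms by (auto simp: double_cap_diag_def dots_def)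

lemma comp_path_vertical_outside:
  assumes A: "brauer_diagram N A" and B: "brauer_diagram N B" and x: "x \<in> dots N"
    and outside: "x \<notin> T" "B x \<notin> T"
    and vertical: "\<And>k. (k, 1) \<in> dots N \<Longrightarrow> (k, 1) \<notin> T \<Longrightarrow> A (k, 1) = (k, 0)"
  shows "(out_map x, out_map (B x)) \<in> (comp_edges N A B)\<^sup>*"
proof (rule comp_path_vertical_through[OF B x])
  show "snd x = 1 \<Longrightarrow> A x = flip_dot x"
    using x outside(1) vertical by (cases x) (auto simp: flip_dot_def)
  obtain q f where Bx: "B x = (q, f)" by (cases "B x")
  have "(q, f) \<in> dots N" using brauer_diagram_closed[OF B x] Bx by simp
  thus "snd (B x) = 1 \<Longrightarrow> A (flip_dot (B x)) = B x"
    using Bx outside(2) vertical[of q] brauer_diagram_involution[OF A, of "(q, 1)"]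
    by (auto simp: flip_dot_def dots_def)
qed

lemma comp_path_top_arc: "(a, 1) \<in> dots N \<Longrightarrow> A (a, 1) = (c, 1) \<Longrightarrow> ((0, a), (0, c)) \<in> (comp_edges N A B)\<^sup>*"
  using upper_edge[of "(a, 1)" N A B] by auto

text \<open>The cases are distinguished by the
strands at the dots \<open>(j, 1)\<close> and \<open>(j, 0)\<close>; in each the diagram is written as a product of a
diagram of \<open>phi_diagrams n\<close> and a diagram of \<open>sym_vertical_below n (Suc j)\<close>.\<close>

context
  fixes n j :: nat
  assumes n: "1 \<le> n" and j: "1 \<le> j" "j \<le> n"
    and IH: "\<And>d. sym_vertical_below n (Suc j) d \<Longrightarrow> d \<in> phi_diagrams n"
begin

lemma mirror_arcs_case:
  assumes D: "sym_vertical_below n j d"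
    and top: "d (j, 1) = (2 * n + 1 - j, 1)" and bottom: "d (j, 0) = (2 * n + 1 - j, 0)"
  shows "d \<in> phi_diagrams n"
proof -
  define M where "M = 2 * n + 1 - j"
  have jM: "j < M" "M \<le> 2 * n" "2 * n + 1 - M = j" using j by (auto simp: M_def)
  have bd: "brauer_diagram (2 * n) d" using D by (auto simp: sym_vertical_below_def)
  have dots: "(j, 1) \<in> dots (2 * n)" "(j, 0) \<in> dots (2 * n)" "(M, 1) \<in> dots (2 * n)" "(M, 0) \<in> dots (2 * n)"
    using jM j by (auto simp: dots_def)
  have dv: "d (j, 1) = (M, 1)" "d (j, 0) = (M, 0)" "d (M, 1) = (j, 1)" "d (M, 0) = (j, 0)"
    using top bottom brauer_diagram_involution[OF bd dots(1)] brauer_diagram_involution[OF bd dots(2)]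
    by (auto simp: M_def)
  define S :: "dot set" where "S = {(j, 1), (j, 0), (M, 1), (M, 0)}"
  define g :: "dot \<Rightarrow> dot" where
    "g = (\<lambda>x. if x = (j, 1) then (j, 0) else if x = (j, 0) then (j, 1) else if x = (M, 1) then (M, 0) else (M, 1))"
  define e where "e = override_diag S g d"
  have De: "sym_vertical_below n (Suc j) e" unfolding e_def
    by (rule sym_vertical_below_override_diag[OF D])
      (use dots dv jM in \<open>auto simp: S_def g_def\<close>)
  hence be: "brauer_diagram (2 * n) e" by (simp add: sym_vertical_below_def)
  have ev: "e (j, 1) = (j, 0)" "e (M, 1) = (M, 0)" and eo: "\<And>x. x \<notin> S \<Longrightarrow> e x = d x"
    using jM by (auto simp: e_def override_diag_def S_def g_def)
  have "compose (2 * n) (cap_diag (2 * n) j M) e = cap_above (2 * n) j M e"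
    using jM j ev by (intro compose_cap_diag be) auto
  also have "\<dots> = d"
  proof (rule diag_eqI)
    fix k e' assume "(k, e') \<notin> dots (2 * n)"
    thus "cap_above (2 * n) j M e (k, e') = d (k, e')" using brauer_diagram_outside[OF bd] by (simp add: cap_above_def)
  next
    fix k assume "1 \<le> k" "k \<le> 2 * n"
    hence "(k, 0) \<in> dots (2 * n)" "(k, Suc 0) \<in> dots (2 * n)" by (simp_all add: dots_def)
    thus "cap_above (2 * n) j M e (k, 0) = d (k, 0)" "cap_above (2 * n) j M e (k, Suc 0) = d (k, Suc 0)"
      using ev eo[of "(k, 0)"] eo[of "(k, Suc 0)"] dv by (auto simp: cap_above_def S_def)
  qed
  finally show ?thesis
    using phi_diagrams.phi_compose[OF _ IH[OF De]] mirror_cap_in_phi_diagrams[OF n j] by (metis M_def)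
qed

text \<open>In the next two cases \<open>d\<close> has the top arc \<open>j\<close>--\<open>j + 1\<close>. It is the product of the double
cap \<open>\<phi>(e\<^sub>n\<^sub>-\<^sub>j)\<close> with the diagram obtained from \<open>d\<close> by making the strands at \<open>j\<close> and at its
mirror column vertical and joining their former partners; this changes \<open>d\<close> only on a set \<open>S\<close>
of dots closed under \<open>d\<close>.\<close>

lemma double_cap_case:
  assumes D: "sym_vertical_below n j d" and jn: "j < n"
    and S: "S \<subseteq> dots (2 * n)" and closed: "\<And>x. x \<in> S \<Longrightarrow> d x \<in> S"
    and g: "\<And>x. x \<in> S \<Longrightarrow> g x \<in> S \<and> g x \<noteq> x \<and> g (g x) = x"
    and rS: "\<And>x. x \<in> S \<Longrightarrow> reflect (2 * n) x \<in> S"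
    and rg: "\<And>x. x \<in> S \<Longrightarrow> g (reflect (2 * n) x) = reflect (2 * n) (g x)"
    and gj: "g (j, 1) = (j, 0)"
    and S_top: "\<And>k. (k, 1) \<in> S \<longleftrightarrow> k = j \<or> k = Suc j \<or> k = 2 * n - j \<or> k = 2 * n + 1 - j"
    and paths: "\<And>x. x \<in> S \<Longrightarrow>
      (out_map x, out_map (d x)) \<in> (comp_edges (2 * n) (double_cap_diag (2 * n) j (2 * n - j)) (override_diag S g d))\<^sup>*"
  shows "d \<in> phi_diagrams n"
proof -
  let ?C = "double_cap_diag (2 * n) j (2 * n - j)" and ?A = "override_diag S g d"
  have bd: "brauer_diagram (2 * n) d" using D by (simp add: sym_vertical_below_def)
  have DA: "sym_vertical_below n (Suc j) ?A"
    by (rule sym_vertical_below_override_diag[OF D S closed g rS rg gj]) (use S_top jn in auto)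
  hence bA: "brauer_diagram (2 * n) ?A" by (simp add: sym_vertical_below_def)
  have C: "?C \<in> phi_diagrams n" by (rule double_cap_in_phi_diagrams[OF j(1) jn])
  hence bC: "brauer_diagram (2 * n) ?C" by (rule phi_diagrams_brauer[OF n])
  have C_vertical: "\<And>k. (k, 1) \<in> dots (2 * n) \<Longrightarrow> (k, 1) \<notin> S \<Longrightarrow> ?C (k, 1) = (k, 0)"
    using double_cap_diag_simps(5)[of j "2 * n - j" "2 * n" 1] S_top jn j by (auto simp: dots_def)
  have "compose (2 * n) ?C ?A = d"
  proof (rule compose_eqI[OF bC bA bd])
    fix x assume x: "x \<in> dots (2 * n)"
    show "(out_map x, out_map (d x)) \<in> (comp_edges (2 * n) ?C ?A)\<^sup>*"
    proof (cases "x \<in> S")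
      case False
      moreover have "d x \<notin> S" using False closed brauer_diagram_involution[OF bd x] by metis
      ultimately show ?thesis
        using comp_path_vertical_outside[OF bC bA x, of S] C_vertical by (simp add: override_diag_def)
    qed (rule paths)
  qed
  thus ?thesis using phi_diagrams.phi_compose[OF C IH[OF DA]] by simp
qed

lemma adjacent_arc_case:
  assumes D: "sym_vertical_below n j d" and jn: "j < n"
    and top: "d (j, 1) = (Suc j, 1)" and bottom: "d (j, 0) = (p, 0)" and p: "p \<noteq> 2 * n + 1 - j"
  shows "d \<in> phi_diagrams n"
proof -
  define b where "b = 2 * n - j"
  define M where "M = 2 * n + 1 - j"
  define p' where "p' = 2 * n + 1 - p"
  have bd: "brauer_diagram (2 * n) d" using D by (auto simp: sym_vertical_below_def)
  have jd: "(j, 0) \<in> dots (2 * n)" using j by (simp add: dots_def)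
  have "j \<le> p \<and> p \<le> 2 * n + 1 - j" using sym_vertical_below_inner[OF D j(1) _ _ _ _ bottom] j by auto
  moreover have "p \<noteq> j" using brauer_diagram_no_fixpoint[OF bd jd] bottom by auto
  ultimately have num: "Suc j < b" "M = Suc b" "M \<le> 2 * n" "Suc j \<le> p" "p \<le> b"
    "Suc j \<le> p'" "p' \<le> b"
    and mirror: "2 * n + 1 - j = M" "2 * n + 1 - Suc j = b" "2 * n + 1 - b = Suc j" "2 * n + 1 - M = j"
      "2 * n + 1 - p = p'" "2 * n + 1 - p' = p"
    using p jn j unfolding b_def M_def p'_def by auto
  have "p \<noteq> p'" unfolding p'_def by presburger
  have dts: "(j, 1) \<in> dots (2 * n)" "(j, 0) \<in> dots (2 * n)" "(M, 1) \<in> dots (2 * n)" "(M, 0) \<in> dots (2 * n)"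
    "(Suc j, 1) \<in> dots (2 * n)" "(p, 0) \<in> dots (2 * n)" "(b, 1) \<in> dots (2 * n)" "(p', 0) \<in> dots (2 * n)"
    using num j by (auto simp: dots_def)
  have "d (M, 1) = (b, 1)" "d (M, 0) = (p', 0)"
    using sym_vertical_below_reflect[OF D, of j 1] sym_vertical_below_reflect[OF D, of j 0] top bottom j mirror
    by simp_all
  hence dv: "d (j, 1) = (Suc j, 1)" "d (j, 0) = (p, 0)" "d (M, 1) = (b, 1)" "d (M, 0) = (p', 0)"
    "d (Suc j, 1) = (j, 1)" "d (p, 0) = (j, 0)" "d (b, 1) = (M, 1)" "d (p', 0) = (M, 0)"
    using top bottom brauer_diagram_involution[OF bd] dts by metis+
  define S :: "dot set" where "S = {(j, 1), (j, 0), (M, 1), (M, 0), (Suc j, 1), (p, 0), (b, 1), (p', 0)}"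
  define g :: "dot \<Rightarrow> dot" where "g = (\<lambda>x. if x = (j, 1) then (j, 0) else if x = (j, 0) then (j, 1)
     else if x = (M, 1) then (M, 0) else if x = (M, 0) then (M, 1) else if x = (Suc j, 1) then (p, 0)
     else if x = (p, 0) then (Suc j, 1) else if x = (b, 1) then (p', 0) else (b, 1))"
  have neq: "j \<noteq> Suc j" "j \<noteq> b" "j \<noteq> M" "Suc j \<noteq> b" "Suc j \<noteq> M" "b \<noteq> M"
    "p \<noteq> j" "p \<noteq> M" "p' \<noteq> j" "p' \<noteq> M" "p \<noteq> p'" using num \<open>p \<noteq> p'\<close> by auto
  have gv: "g (j, 1) = (j, 0)" "g (j, 0) = (j, 1)" "g (M, 1) = (M, 0)" "g (M, 0) = (M, 1)"
    "g (Suc j, 1) = (p, 0)" "g (p, 0) = (Suc j, 1)" "g (b, 1) = (p', 0)" "g (p', 0) = (b, 1)"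
    unfolding g_def using neq by simp_all
  have S_cases: "\<And>x. x \<in> S \<Longrightarrow> x = (j, 1) \<or> x = (j, 0) \<or> x = (M, 1) \<or> x = (M, 0) \<or> x = (Suc j, 1)
      \<or> x = (p, 0) \<or> x = (b, 1) \<or> x = (p', 0)"
    and S_mem: "(j, 1) \<in> S" "(j, 0) \<in> S" "(M, 1) \<in> S" "(M, 0) \<in> S" "(Suc j, 1) \<in> S" "(p, 0) \<in> S"
      "(b, 1) \<in> S" "(p', 0) \<in> S"
    by (simp_all add: S_def)
  let ?C = "double_cap_diag (2 * n) j b" and ?A = "override_diag S g d"
  have cv: "?C (j, 0) = (Suc j, 0)" "?C (j, 1) = (Suc j, 1)" "?C (Suc j, 1) = (j, 1)" "?C (M, 0) = (b, 0)"
    "?C (b, 1) = (M, 1)" "?C (M, 1) = (b, 1)"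
    using double_cap_diag_simps(1-4)[of j b "2 * n" 0] double_cap_diag_simps(1-4)[of j b "2 * n" 1] num j
    by simp_all
  have av: "?A (j, 0) = (j, 1)" "?A (Suc j, 1) = (p, 0)" "?A (M, 0) = (M, 1)" "?A (b, 1) = (p', 0)"
    using S_mem gv by (simp_all add: override_diag_def)
  have S_sub: "S \<subseteq> dots (2 * n)" using dts by (auto simp: S_def)
  have closed: "\<And>x. x \<in> S \<Longrightarrow> d x \<in> S" using S_cases dv S_mem by fastforce
  have g_inv: "g x \<in> S \<and> g x \<noteq> x \<and> g (g x) = x" if "x \<in> S" for x
    using S_cases[OF that] gv S_mem neq by (elim disjE) simp_all
  have S_reflect: "reflect (2 * n) x \<in> S" if "x \<in> S" for x
    using S_cases[OF that] mirror S_mem by (elim disjE) simp_all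
  have g_reflect: "g (reflect (2 * n) x) = reflect (2 * n) (g x)" if "x \<in> S" for x
    using S_cases[OF that] mirror gv by (elim disjE) simp_all
  have bA: "brauer_diagram (2 * n) ?A" by (rule brauer_diagram_override_diag[OF bd S_sub closed g_inv])
  have bC: "brauer_diagram (2 * n) ?C"
    using phi_diagrams_brauer[OF n double_cap_in_phi_diagrams[OF j(1) jn]] by (simp add: b_def)
  have path_j: "((2, j), (2, p)) \<in> (comp_edges (2 * n) ?C ?A)\<^sup>*"
    using comp_path_under_cap[where A = "double_cap_diag (2 * n) j b", OF bA dts(2,5) av(1) cv(1)] av by simp
  have path_M: "((2, M), (2, p')) \<in> (comp_edges (2 * n) ?C ?A)\<^sup>*"
    using comp_path_under_cap[where A = "double_cap_diag (2 * n) j b", OF bA dts(4,7) av(3) cv(4)] av by simp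
  show ?thesis
  proof (rule double_cap_case[OF D jn S_sub closed g_inv S_reflect g_reflect gv(1)])
    show "(k, 1) \<in> S \<longleftrightarrow> k = j \<or> k = Suc j \<or> k = 2 * n - j \<or> k = 2 * n + 1 - j" for k
      by (auto simp: S_def b_def M_def)
    fix x assume "x \<in> S"
    from S_cases[OF this]
    show "(out_map x, out_map (d x)) \<in> (comp_edges (2 * n) (double_cap_diag (2 * n) j (2 * n - j)) ?A)\<^sup>*"
      using dv path_j path_M comp_paths_sym[OF bC bA path_j] comp_paths_sym[OF bC bA path_M]
        comp_path_top_arc[where A = "double_cap_diag (2 * n) j b" and B = "override_diag S g d", OF dts(1) cv(2)] comp_path_top_arc[where A = "double_cap_diag (2 * n) j b" and B = "override_diag S g d", OF dts(5) cv(3)]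
        comp_path_top_arc[where A = "double_cap_diag (2 * n) j b" and B = "override_diag S g d", OF dts(7) cv(5)] comp_path_top_arc[where A = "double_cap_diag (2 * n) j b" and B = "override_diag S g d", OF dts(3) cv(6)]
      unfolding b_def[symmetric] by (elim disjE) simp_all
  qed
qed

lemma adjacent_arc_mirror_case:
  assumes D: "sym_vertical_below n j d" and jn: "j < n"
    and top: "d (j, 1) = (Suc j, 1)" and bottom: "d (j, 0) = (2 * n + 1 - j, 0)"
  shows "d \<in> phi_diagrams n"
proof -
  define b where "b = 2 * n - j"
  define M where "M = 2 * n + 1 - j"
  have bd: "brauer_diagram (2 * n) d" using D by (auto simp: sym_vertical_below_def)
  have num: "Suc j < b" "M = Suc b" "M \<le> 2 * n"
    and mirror: "2 * n + 1 - j = M" "2 * n + 1 - Suc j = b" "2 * n + 1 - b = Suc j" "2 * n + 1 - M = j"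
    using jn j unfolding b_def M_def by auto
  have dts: "(j, 1) \<in> dots (2 * n)" "(j, 0) \<in> dots (2 * n)" "(M, 1) \<in> dots (2 * n)" "(M, 0) \<in> dots (2 * n)"
    "(Suc j, 1) \<in> dots (2 * n)" "(b, 1) \<in> dots (2 * n)" "(Suc j, 0) \<in> dots (2 * n)" "(b, 0) \<in> dots (2 * n)"
    using num j by (auto simp: dots_def)
  have "d (M, 1) = (b, 1)" using sym_vertical_below_reflect[OF D, of j 1] top j mirror by simp
  hence dv: "d (j, 1) = (Suc j, 1)" "d (j, 0) = (M, 0)" "d (M, 1) = (b, 1)" "d (M, 0) = (j, 0)"
    "d (Suc j, 1) = (j, 1)" "d (b, 1) = (M, 1)"
    using top bottom brauer_diagram_involution[OF bd] dts mirror by metis+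
  define S :: "dot set" where "S = {(j, 1), (j, 0), (M, 1), (M, 0), (Suc j, 1), (b, 1)}"
  define g :: "dot \<Rightarrow> dot" where "g = (\<lambda>x. if x = (j, 1) then (j, 0) else if x = (j, 0) then (j, 1)
     else if x = (M, 1) then (M, 0) else if x = (M, 0) then (M, 1) else if x = (Suc j, 1) then (b, 1)
     else (Suc j, 1))"
  have neq: "j \<noteq> Suc j" "j \<noteq> b" "j \<noteq> M" "Suc j \<noteq> b" "Suc j \<noteq> M" "b \<noteq> M" using num by auto
  have gv: "g (j, 1) = (j, 0)" "g (j, 0) = (j, 1)" "g (M, 1) = (M, 0)" "g (M, 0) = (M, 1)"
    "g (Suc j, 1) = (b, 1)" "g (b, 1) = (Suc j, 1)"
    unfolding g_def using neq by simp_all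
  have S_cases: "\<And>x. x \<in> S \<Longrightarrow> x = (j, 1) \<or> x = (j, 0) \<or> x = (M, 1) \<or> x = (M, 0) \<or> x = (Suc j, 1) \<or> x = (b, 1)"
    and S_mem: "(j, 1) \<in> S" "(j, 0) \<in> S" "(M, 1) \<in> S" "(M, 0) \<in> S" "(Suc j, 1) \<in> S" "(b, 1) \<in> S"
    by (simp_all add: S_def)
  let ?C = "double_cap_diag (2 * n) j b" and ?A = "override_diag S g d"
  have cv: "?C (j, 0) = (Suc j, 0)" "?C (j, 1) = (Suc j, 1)" "?C (Suc j, 1) = (j, 1)" "?C (b, 0) = (M, 0)"
    "?C (b, 1) = (M, 1)" "?C (M, 1) = (b, 1)"
    using double_cap_diag_simps(1-4)[of j b "2 * n" 0] double_cap_diag_simps(1-4)[of j b "2 * n" 1] num j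
    by simp_all
  have av: "?A (j, 0) = (j, 1)" "?A (Suc j, 1) = (b, 1)" "?A (M, 1) = (M, 0)"
    using S_mem gv by (simp_all add: override_diag_def)
  have S_sub: "S \<subseteq> dots (2 * n)" using dts by (auto simp: S_def)
  have closed: "\<And>x. x \<in> S \<Longrightarrow> d x \<in> S" using S_cases dv S_mem by fastforce
  have g_inv: "g x \<in> S \<and> g x \<noteq> x \<and> g (g x) = x" if "x \<in> S" for x
    using S_cases[OF that] gv S_mem neq by (elim disjE) simp_all
  have S_reflect: "reflect (2 * n) x \<in> S" if "x \<in> S" for x
    using S_cases[OF that] mirror S_mem by (elim disjE) simp_all
  have g_reflect: "g (reflect (2 * n) x) = reflect (2 * n) (g x)" if "x \<in> S" for x
    using S_cases[OF that] mirror gv by (elim disjE) simp_all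
  have bA: "brauer_diagram (2 * n) ?A" by (rule brauer_diagram_override_diag[OF bd S_sub closed g_inv])
  have bC: "brauer_diagram (2 * n) ?C"
    using phi_diagrams_brauer[OF n double_cap_in_phi_diagrams[OF j(1) jn]] by (simp add: b_def)
  have path: "((2, j), (2, M)) \<in> (comp_edges (2 * n) ?C ?A)\<^sup>*"
  proof -
    have "((2, j), (1, j)) \<in> comp_edges (2 * n) ?C ?A" using lower_edge[OF dts(2), of ?A ?C] av by simp
    also have "((1, j), (1, Suc j)) \<in> comp_edges (2 * n) ?C ?A" using upper_edge[OF dts(2), of ?C ?A] cv by simp
    also have "((1, Suc j), (1, b)) \<in> comp_edges (2 * n) ?C ?A" using lower_edge[OF dts(5), of ?A ?C] av by simp
    also have "((1, b), (1, M)) \<in> comp_edges (2 * n) ?C ?A" using upper_edge[OF dts(8), of ?C ?A] cv by simp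
    also have "((1, M), (2, M)) \<in> comp_edges (2 * n) ?C ?A" using lower_edge[OF dts(3), of ?A ?C] av by simp
    finally show ?thesis by simp
  qed
  show ?thesis
  proof (rule double_cap_case[OF D jn S_sub closed g_inv S_reflect g_reflect gv(1)])
    show "(k, 1) \<in> S \<longleftrightarrow> k = j \<or> k = Suc j \<or> k = 2 * n - j \<or> k = 2 * n + 1 - j" for k
      by (auto simp: S_def b_def M_def)
    fix x assume "x \<in> S"
    from S_cases[OF this]
    show "(out_map x, out_map (d x)) \<in> (comp_edges (2 * n) (double_cap_diag (2 * n) j (2 * n - j)) ?A)\<^sup>*"
      using dv path comp_paths_sym[OF bC bA path]
        comp_path_top_arc[where A = "double_cap_diag (2 * n) j b" and B = "override_diag S g d", OF dts(1) cv(2)] comp_path_top_arc[where A = "double_cap_diag (2 * n) j b" and B = "override_diag S g d", OF dts(5) cv(3)]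
        comp_path_top_arc[where A = "double_cap_diag (2 * n) j b" and B = "override_diag S g d", OF dts(6) cv(5)] comp_path_top_arc[where A = "double_cap_diag (2 * n) j b" and B = "override_diag S g d", OF dts(3) cv(6)]
      unfolding b_def[symmetric] by (elim disjE) simp_all
  qed
qed

lemma vertical_top_case:
  "sym_vertical_below n j d \<Longrightarrow> d (j, 1) = (p, 0) \<Longrightarrow> d \<in> phi_diagrams n"
proof (induction p arbitrary: d)
  case 0
  have "(j, 1) \<in> dots (2 * n)" using j by (simp add: dots_def)
  thus ?case using brauer_diagram_closed[of "2 * n" d "(j, 1)"] 0 by (simp add: sym_vertical_below_def dots_def)
next
  case (Suc q)
  have D: "sym_vertical_below n j d" and dj: "d (j, 1) = (Suc q, 0)" using Suc by auto
  show ?case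
  proof (cases "Suc q = j")
    case True
    hence "sym_vertical_below n (Suc j) d" using D dj unfolding sym_vertical_below_def by (auto simp: less_Suc_eq)
    thus ?thesis by (rule IH)
  next
    case False
    txt \<open>Relabelling the bottom by \<open>sym_shift\<close> moves the strand one step to the left.\<close>
    have "j \<le> Suc q \<and> Suc q \<le> 2 * n + 1 - j" using sym_vertical_below_inner[OF D j(1) _ _ _ _ dj] j by auto
    hence q: "Suc j \<le> Suc q" "Suc q \<le> 2 * n + 1 - j" "2 \<le> Suc q" "Suc q \<le> 2 * n" using False j by auto
    let ?\<pi> = "sym_shift n (Suc q)"
    have \<pi>: "involution_on (2 * n) ?\<pi>" by (rule involution_on_sym_shift[OF n q(3,4)])
    define d' where "d' = relabel_bottom (2 * n) ?\<pi> d"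
    have D': "sym_vertical_below n j d'" unfolding d'_def by (rule sym_vertical_below_relabel(1)[OF D n j q(1,2)])
    have "(j, 1) \<in> dots (2 * n)" using j by (simp add: dots_def)
    hence "d' (j, 1) = (q, 0)" using dj sym_shift_moves[OF q(3,4)] by (simp add: d'_def relabel_bottom_def perm_bottom_def)
    hence "d' \<in> phi_diagrams n" by (rule Suc.IH[OF D'])
    moreover have "d = compose (2 * n) d' (perm_diag (2 * n) ?\<pi>)"
      using D D' relabel_bottom_involution[OF \<pi>] compose_perm_diag_right[OF \<pi>]
      by (simp add: d'_def sym_vertical_below_def)
    ultimately show ?thesis using phi_diagrams.phi_compose sym_shift_in_phi_diagrams[OF q(3,4)] by simp
  qed
qed

lemma phi_diagrams_if_flip:
  assumes D: "sym_vertical_below n j d" and flipped: "flip_diag (2 * n) d \<in> phi_diagrams n"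
  shows "d \<in> phi_diagrams n"
  using phi_diagrams_flip_closed[OF n flipped] flip_diag_involution D by (simp add: sym_vertical_below_def)

lemma vertical_bottom_case:
  assumes D: "sym_vertical_below n j d" and bottom: "d (j, 0) = (q, 1)" shows "d \<in> phi_diagrams n"
proof (rule phi_diagrams_if_flip[OF D])
  have "(j, 1) \<in> dots (2 * n)" using j by (simp add: dots_def)
  hence "flip_diag (2 * n) d (j, 1) = (q, 0)" using bottom by (simp add: flip_diag_def flip_dot_def)
  moreover have "sym_vertical_below n j (flip_diag (2 * n) d)" using sym_vertical_below_flip_diag[OF D] j by simp
  ultimately show "flip_diag (2 * n) d \<in> phi_diagrams n" using vertical_top_case by blast
qed

lemma top_arc_case:
  "sym_vertical_below n j d \<Longrightarrow> d (j, 1) = (q, 1) \<Longrightarrow> q \<noteq> 2 * n + 1 - j \<Longrightarrow> d (j, 0) = (p, 0) \<Longrightarrow>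
    d \<in> phi_diagrams n"
proof (induction q arbitrary: d)
  case 0
  have "(j, 1) \<in> dots (2 * n)" using j by (simp add: dots_def)
  thus ?case using brauer_diagram_closed[of "2 * n" d "(j, 1)"] 0 by (simp add: sym_vertical_below_def dots_def)
next
  case (Suc q)
  have D: "sym_vertical_below n j d" and dj: "d (j, 1) = (Suc q, 1)" and qM: "Suc q \<noteq> 2 * n + 1 - j"
    and dp: "d (j, 0) = (p, 0)" using Suc by auto
  have bd: "brauer_diagram (2 * n) d" using D by (simp add: sym_vertical_below_def)
  have jd: "(j, 1) \<in> dots (2 * n)" "(j, 0) \<in> dots (2 * n)" using j by (auto simp: dots_def)
  have range: "j \<le> Suc q \<and> Suc q \<le> 2 * n + 1 - j" using sym_vertical_below_inner[OF D j(1) _ _ _ _ dj] j by auto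
  have "Suc q \<noteq> j" using brauer_diagram_no_fixpoint[OF bd jd(1)] dj by auto
  show ?case
  proof (cases "q = j")
    case True
    hence "j < n" "d (j, 1) = (Suc j, 1)" using range qM dj by auto
    thus ?thesis using adjacent_arc_case[OF D] adjacent_arc_mirror_case[OF D] dp by (cases "p = 2 * n + 1 - j") auto
  next
    case False
    txt \<open>Relabelling the top by \<open>sym_shift\<close> moves the arc end one step to the left.\<close>
    hence q: "Suc j \<le> Suc q" "Suc q \<le> 2 * n + 1 - j" "2 \<le> Suc q" "Suc q \<le> 2 * n" "Suc (Suc j) \<le> Suc q"
      "Suc q \<le> 2 * n - j"
      using range \<open>Suc q \<noteq> j\<close> qM j by auto
    let ?\<pi> = "sym_shift n (Suc q)"
    have \<pi>: "involution_on (2 * n) ?\<pi>" by (rule involution_on_sym_shift[OF n q(3,4)])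
    have \<pi>j: "?\<pi> j = j" using q by (intro sym_shift_fixes) auto
    define d' where "d' = relabel_top (2 * n) ?\<pi> d"
    have D': "sym_vertical_below n j d'" unfolding d'_def by (rule sym_vertical_below_relabel(2)[OF D n j q(1,2)])
    have "d' (j, 1) = (q, 1)" "d' (j, 0) = (p, 0)"
      using jd dj dp \<pi>j sym_shift_moves[OF q(3,4)] by (simp_all add: d'_def relabel_top_def perm_top_def)
    moreover have "q \<noteq> 2 * n + 1 - j" using q by auto
    ultimately have "d' \<in> phi_diagrams n" using Suc.IH[OF D'] by simp
    moreover have "d = compose (2 * n) (perm_diag (2 * n) ?\<pi>) d'"
      using D' relabel_top_involution[OF \<pi> bd] compose_perm_diag_left[OF \<pi>]
      by (simp add: d'_def sym_vertical_below_def)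
    ultimately show ?thesis using phi_diagrams.phi_compose sym_shift_in_phi_diagrams[OF q(3,4)] by simp
  qed
qed

lemma sym_vertical_below_step:
  assumes D: "sym_vertical_below n j d" shows "d \<in> phi_diagrams n"
proof -
  have bd: "brauer_diagram (2 * n) d" using D by (simp add: sym_vertical_below_def)
  have jd: "(j, 1) \<in> dots (2 * n)" "(j, 0) \<in> dots (2 * n)" using j by (auto simp: dots_def)
  obtain p f where pf: "d (j, 1) = (p, f)" "f = 0 \<or> f = 1"
    using brauer_diagram_closed[OF bd jd(1)] by (cases "d (j, 1)") (auto simp: dots_def)
  obtain p' f' where pf': "d (j, 0) = (p', f')" "f' = 0 \<or> f' = 1"
    using brauer_diagram_closed[OF bd jd(2)] by (cases "d (j, 0)") (auto simp: dots_def)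
  consider "f = 0" | "f' = 1" | "f = 1" "f' = 0" "p \<noteq> 2 * n + 1 - j"
    | "f = 1" "f' = 0" "p = 2 * n + 1 - j" "p' = 2 * n + 1 - j"
    | "f = 1" "f' = 0" "p = 2 * n + 1 - j" "p' \<noteq> 2 * n + 1 - j"
    using pf(2) pf'(2) by blast
  thus ?thesis
  proof cases
    case 1 thus ?thesis using vertical_top_case[OF D] pf by simp
  next
    case 2 thus ?thesis using vertical_bottom_case[OF D] pf' by simp
  next
    case 3 thus ?thesis using top_arc_case[OF D] pf pf' by simp
  next
    case 4 thus ?thesis using mirror_arcs_case[OF D] pf pf' by simp
  next
    case 5
    show ?thesis
    proof (rule phi_diagrams_if_flip[OF D])
      have "flip_diag (2 * n) d (j, 1) = (p', 1)" "flip_diag (2 * n) d (j, 0) = (2 * n + 1 - j, 0)"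
        using jd pf pf' 5 by (simp_all add: flip_diag_def flip_dot_def)
      thus "flip_diag (2 * n) d \<in> phi_diagrams n"
        using top_arc_case[OF sym_vertical_below_flip_diag[OF D]] 5 j by simp
    qed
  qed
qed

end

lemma sym_vertical_below_all_id:
  assumes D: "sym_vertical_below n (Suc n) d" shows "d = id_diag (2 * n)"
proof (rule diag_eqI)
  have bd: "brauer_diagram (2 * n) d" using D by (simp add: sym_vertical_below_def)
  fix k e assume "(k, e) \<notin> dots (2 * n)"
  thus "d (k, e) = id_diag (2 * n) (k, e)" using brauer_diagram_outside[OF bd] by (simp add: id_diag_def)
next
  fix k assume k: "1 \<le> k" "k \<le> 2 * n"
  have "d (k, 0) = (k, 1) \<and> d (k, 1) = (k, 0)"
  proof (cases "k \<le> n")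
    case True thus ?thesis using sym_vertical_below_vertical(1,2)[OF D, of k] k by simp
  next
    case False
    hence "1 \<le> 2 * n + 1 - k" "2 * n + 1 - k < Suc n" "2 * n + 1 - (2 * n + 1 - k) = k" using k by auto
    thus ?thesis using sym_vertical_below_vertical(3,4)[OF D, of "2 * n + 1 - k"] by simp
  qed
  thus "d (k, 0) = id_diag (2 * n) (k, 0)" "d (k, Suc 0) = id_diag (2 * n) (k, Suc 0)"
    using k by (simp_all add: id_diag_def dots_def)
qed

theorem symmetric_in_phi_diagrams:
  assumes n: "1 \<le> n" and b: "brauer_diagram (2 * n) d" and s: "symmetric_diag (2 * n) d"
  shows "d \<in> phi_diagrams n"
proof -
  have "t \<le> n \<Longrightarrow> sym_vertical_below n (Suc n - t) d' \<Longrightarrow> d' \<in> phi_diagrams n" for t d'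
  proof (induction t arbitrary: d')
    case 0
    hence "d' = id_diag (2 * n)" using sym_vertical_below_all_id by simp
    thus ?case by (simp add: phi_diagrams.phi_id)
  next
    case (Suc t)
    have "Suc n - Suc t = n - t" "Suc n - t = Suc (n - t)" "1 \<le> n - t" "n - t \<le> n" using Suc.prems(1) by auto
    thus ?case using sym_vertical_below_step[OF n, of "n - t"] Suc by simp
  qed
  moreover have "sym_vertical_below n (Suc n - n) d" using b s by (simp add: sym_vertical_below_def)
  ultimately show ?thesis by blast
qed

section \<open>The symmetric subalgebra\<close>

lemma SBr_iff:
  "a \<in> SBr N \<longleftrightarrow> (\<forall>d. a d \<noteq> 0 \<longrightarrow> brauer_diagram N d \<and> symmetric_diag N d) \<and> (\<forall>d. laurent_poly (a d))"
  by (auto simp: SBr_def Br_def)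

lemma basis_elem_SBr: "brauer_diagram N d \<Longrightarrow> symmetric_diag N d \<Longrightarrow> basis_elem d \<in> SBr N"
  by (auto simp: SBr_iff basis_elem_def)

lemma SBr_add: "x \<in> SBr N \<Longrightarrow> y \<in> SBr N \<Longrightarrow> (\<lambda>d. x d + y d) \<in> SBr N"
  unfolding SBr_iff by (metis add.right_neutral add_0 laurent_poly_add)

lemma SBr_smult: "laurent_poly c \<Longrightarrow> x \<in> SBr N \<Longrightarrow> (\<lambda>d. c * x d) \<in> SBr N"
  by (auto simp: SBr_iff intro: laurent_poly_mult)

lemma SBr_mult:
  assumes x: "x \<in> SBr N" and y: "y \<in> SBr N" shows "br_mult N x y \<in> SBr N"
  unfolding SBr_iff
proof (intro conjI allI impI)
  fix d
  let ?S = "{(d1, d2). brauer_diagram N d1 \<and> brauer_diagram N d2 \<and> compose N d1 d2 = d}"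
  let ?f = "\<lambda>(d1, d2). x d1 * y d2 * delta ^ loops N d1 d2"
  assume "br_mult N x y d \<noteq> 0"
  hence "\<not> (\<forall>p\<in>?S. ?f p = 0)" unfolding br_mult_def using sum.neutral[of ?S ?f] by argo
  then obtain d1 d2 where d: "brauer_diagram N d1" "brauer_diagram N d2" "compose N d1 d2 = d"
    and nonzero: "x d1 * y d2 * delta ^ loops N d1 d2 \<noteq> 0" by auto
  have "symmetric_diag N d1" "symmetric_diag N d2" using nonzero x y by (auto simp: SBr_iff)
  thus "brauer_diagram N d" "symmetric_diag N d"
    using brauer_diagram_compose[OF d(1,2)] symmetric_diag_compose[OF d(1,2)] d(3) by simp_all
next
  fix d
  have "laurent_poly ((\<lambda>(d1, d2). x d1 * y d2 * delta ^ loops N d1 d2) p)" for p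
    using x y by (cases p) (auto simp: SBr_iff intro!: laurent_poly_mult laurent_poly_power)
  thus "laurent_poly (br_mult N x y d)" unfolding br_mult_def by (intro laurent_poly_sum)
qed

lemma br_mult_basis_elem_SBr:
  assumes a: "brauer_diagram N a" and b: "brauer_diagram N b" and s: "symmetric_diag N (compose N a b)"
  shows "br_mult N (basis_elem a) (basis_elem b) \<in> SBr N"
proof -
  have "br_mult N (basis_elem a) (basis_elem b) = (\<lambda>d. delta ^ loops N a b * basis_elem (compose N a b) d)"
    unfolding br_mult_basis_elem[OF a b] by (auto simp: basis_elem_def)
  thus ?thesis using SBr_smult[OF laurent_poly_power[OF laurent_poly_X]]
      basis_elem_SBr[OF brauer_diagram_compose[OF a b] s] by simp
qed

lemma phi_gens_subset_SBr:
  assumes n: "1 \<le> n" shows "phi_gens n \<subseteq> SBr (2 * n)"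
proof
  fix g assume "g \<in> phi_gens n"
  then consider "g = basis_elem (R_diag (2 * n) n)" | "g = basis_elem (E_diag (2 * n) n)"
    | i where "0 < i" "i < n"
      "g = br_mult (2 * n) (basis_elem (R_diag (2 * n) (n - i))) (basis_elem (R_diag (2 * n) (n + i)))"
    | i where "0 < i" "i < n"
      "g = br_mult (2 * n) (basis_elem (E_diag (2 * n) (n - i))) (basis_elem (E_diag (2 * n) (n + i)))"
    unfolding phi_gens_def by blast
  thus "g \<in> SBr (2 * n)"
  proof cases
    case 1 thus ?thesis using phi_diagrams.phi_R
      by (simp add: basis_elem_SBr phi_diagrams_brauer[OF n] phi_diagrams_symmetric[OF n])
  next
    case 2 thus ?thesis using phi_diagrams.phi_E
      by (simp add: basis_elem_SBr phi_diagrams_brauer[OF n] phi_diagrams_symmetric[OF n])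
  next
    case 3 thus ?thesis using phi_diagrams_symmetric[OF n phi_diagrams.phi_RR[of i n]]
      by (simp add: br_mult_basis_elem_SBr brauer_diagram_R_diag)
  next
    case 4 thus ?thesis using phi_diagrams_symmetric[OF n phi_diagrams.phi_EE[of i n]]
      by (simp add: br_mult_basis_elem_SBr brauer_diagram_E_diag)
  qed
qed

lemma phi_image_subset_SBr:
  assumes n: "1 \<le> n" shows "phi_image n \<subseteq> SBr (2 * n)"
proof
  fix x assume "x \<in> phi_image n"
  thus "x \<in> SBr (2 * n)" unfolding phi_image_def
  proof (induction rule: gen_subalg.induct)
    case one thus ?case by (intro basis_elem_SBr brauer_diagram_id symmetric_id_diag)
  qed (use phi_gens_subset_SBr[OF n] SBr_add SBr_smult SBr_mult in blast)+
qed

lemma gen_subalg_zero: "(\<lambda>d. 0) \<in> gen_subalg N G"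
  using gen_subalg.smult[OF laurent_poly_zero gen_subalg.one, of N G] by simp

lemma gen_subalg_sum:
  "finite T \<Longrightarrow> (\<And>t. t \<in> T \<Longrightarrow> f t \<in> gen_subalg N G) \<Longrightarrow> (\<lambda>d. \<Sum>t\<in>T. f t d) \<in> gen_subalg N G"
proof (induction rule: finite_induct)
  case empty thus ?case using gen_subalg_zero by simp
next
  case (insert t T)
  thus ?case using gen_subalg.add[of "f t" N G "\<lambda>d. \<Sum>t\<in>T. f t d"] by simp
qed

lemma Br_basis_expansion:
  assumes "a \<in> Br N" shows "(\<lambda>d'. \<Sum>d\<in>{d. brauer_diagram N d}. a d * basis_elem d d') = a"
proof
  fix d'
  have "(\<Sum>d\<in>{d. brauer_diagram N d}. a d * basis_elem d d') = (\<Sum>d\<in>{d. brauer_diagram N d}. if d' = d then a d else 0)"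
    by (rule sum.cong) (auto simp: basis_elem_def)
  also have "\<dots> = (if brauer_diagram N d' then a d' else 0)"
    using sum.delta[OF finite_brauer_diagrams, of d' a] by (simp add: eq_commute)
  also have "\<dots> = a d'" using assms by (auto simp: Br_def)
  finally show "(\<Sum>d\<in>{d. brauer_diagram N d}. a d * basis_elem d d') = a d'" .
qed

lemma SBr_subset_phi_image:
  assumes n: "1 \<le> n" shows "SBr (2 * n) \<subseteq> phi_image n"
proof
  fix a assume a: "a \<in> SBr (2 * n)"
  have "(\<lambda>d'. a d * basis_elem d d') \<in> phi_image n" for d
  proof (cases "a d = 0")
    case True thus ?thesis using gen_subalg_zero by (simp add: phi_image_def)
  next
    case False
    hence "basis_elem d \<in> phi_image n"
      using a symmetric_in_phi_diagrams[OF n] basis_elem_in_phi_image[OF n] by (auto simp: SBr_iff)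
    moreover have "laurent_poly (a d)" using a by (simp add: SBr_iff)
    ultimately show ?thesis unfolding phi_image_def by (rule gen_subalg.smult[rotated])
  qed
  hence "(\<lambda>d'. \<Sum>d\<in>{d. brauer_diagram (2 * n) d}. a d * basis_elem d d') \<in> phi_image n"
    using gen_subalg_sum[OF finite_brauer_diagrams, of "2 * n" "\<lambda>d d'. a d * basis_elem d d'" "2 * n" "phi_gens n"]
    by (simp add: phi_image_def)
  moreover have "(\<lambda>d'. \<Sum>d\<in>{d. brauer_diagram (2 * n) d}. a d * basis_elem d d') = a"
    using a by (intro Br_basis_expansion) (simp add: SBr_def)
  ultimately show "a \<in> phi_image n" by simp
qed

theorem mainTheorem5:
  fixes n :: nat
  assumes "n \<ge> 2"
  shows "phi_image n = SBr (2 * n)"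
  using phi_image_subset_SBr SBr_subset_phi_image assms by (simp add: set_eq_subset)

end
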